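(* Let $J$ be a non-infinitesimal interval of ${}^\bullet\mathbb{R}$ and let $f:J\to{}^\bullet\mathbb{R}$ be a smooth function such that $f'(x)=0$ for every $x\in\mathrm{int}(J)$. Then $f$ is constant on $J$.
   Context: Fermat reals: let $\mathbb{R}_o[t]$ be the set of maps $x:\mathbb{R}_{\ge0}\to\mathbb{R}$, $t\mapsto x_t$, of the form $x_t=r+\sum_{i=1}^k\alpha_i t^{a_i}+o(t)$ as $t\to0^+$, with $k\in\mathbb{N}$, $r,\alpha_i\in\mathbb{R}$, $a_i\in\mathbb{R}_{\ge0}$. Write $x\sim y$ iff $x_t=y_t+o(t)$ as $t\to0^+$. The ring of Fermat reals is ${}^\bullet\mathbb{R}:=\mathbb{R}_o[t]/\sim$ with pointwise operations; $\mathbb{R}\subseteq{}^\bullet\mathbb{R}$ via constants. The standard part of $x=[x_t]$ is ${}^\circ x:=x_0$ (componentwise on ${}^\bullet\mathbb{R}^n$). ${}^\bullet\mathbb{R}$ is totally ordered by: $x\le y$ iff for representatives there is $z\in\mathbb{R}_o[t]$ with $z\sim0$ and $x_t\le y_t+z_t$ for all small $t\ge0$. Let $\overline{{}^\bullet\mathbb{R}}:={}^\bullet\mathbb{R}\cup\{\pm\infty\}$, ${}^\circ(\pm\infty):=\pm\infty$. An interval is a set $[a,b],(a,b),[a,b),(a,b]$ of points of ${}^\bullet\mathbb{R}$ with $a\le b$ in $\overline{{}^\bullet\mathbb{R}}$; it is non-infinitesimal if ${}^\circ a<{}^\circ b$. The Fermat topology on ${}^\bullet\mathbb{R}^n$ has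 open sets ${}^\bullet V:=\{x:{}^\circ x\in V\}$, $V\subseteq\mathbb{R}^n$ open; $\mathrm{int}(J)=\{x:{}^\circ a<{}^\circ x<{}^\circ b\}$ is the interior in this topology. For $\alpha\in C^\infty(W,\mathbb{R}^m)$, $W\subseteq\mathbb{R}^d$ open, ${}^\bullet\alpha:{}^\bullet W\to{}^\bullet\mathbb{R}^m$, ${}^\bullet\alpha([x_t]):=[\alpha(x_t)]$. A map $f:S\to{}^\bullet\mathbb{R}^m$, $S\subseteq{}^\bullet\mathbb{R}^n$, is smooth (quasi-standard smooth) if for every $x\in S$ there exist open $V\subseteq\mathbb{R}^n$ with $x\in{}^\bullet V$, open $P\subseteq\mathbb{R}^{\mathsf p}$, $p\in{}^\bullet P$ and $\alpha\in C^\infty(P\times V,\mathbb{R}^m)$ with $f(y)={}^\bullet\alpha(p,y)$ for all $y\in{}^\bullet V\cap S$. For $f:J\to{}^\bullet\mathbb{R}$ smooth on a non-infinitesimal interval and $x\in J$, the derivative is $f'(x):={}^\bullet(\partial_2\alpha)(p,x)$ for any such local representation of $f$ around $x$ (this does not depend on the representation; equivalently $f'(x)=r(x,0)$ where $r$ is the unique smooth function with $f(x+h)=f(x)+h\,r(x,h)$ for all sufficiently small $h$ with $x+h\in J$). *)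

theory Defs
  imports "HOL-Analysis.Analysis"
begin

text \<open>t^a with the convention t^0 = 1 (also at t = 0).\<close>
definition tpow :: "real \<Rightarrow> real \<Rightarrow> real" where
  "tpow t a = (if a = 0 then 1 else t powr a)"

definition little_o_t :: "(real \<Rightarrow> real) \<Rightarrow> bool" where
  "little_o_t h \<longleftrightarrow> ((\<lambda>t. h t / t) \<longlongrightarrow> 0) (at_right 0)"

definition Rot :: "(real \<Rightarrow> real) set" where
  "Rot = {x. \<exists>(k::nat) (r::real) (\<alpha>::nat \<Rightarrow> real) (a::nat \<Rightarrow> real) (h::real \<Rightarrow> real).
              (\<forall>i<k. 0 \<le> a i) \<and> h 0 = 0 \<and> little_o_t h \<and>
              (\<forall>t\<ge>0. x t = r + (\<Sum>i<k. \<alpha> i * tpow t (a i)) + h t)}"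

definition fermat_rel :: "(real \<Rightarrow> real) \<Rightarrow> (real \<Rightarrow> real) \<Rightarrow> bool" where
  "fermat_rel x y \<longleftrightarrow> x \<in> Rot \<and> y \<in> Rot \<and> little_o_t (\<lambda>t. x t - y t)"

lemma zero_in_Rot: "(\<lambda>t. 0) \<in> Rot"
  unfolding Rot_def little_o_t_def
  by (rule CollectI, rule exI[of _ 0], rule exI[of _ 0], rule exI, rule exI, rule exI[of _ "\<lambda>t. 0"]) simp

lemma fermat_rel_part_equivp: "part_equivp fermat_rel"
proof (rule part_equivpI)
  show "\<exists>x. fermat_rel x x"
    using zero_in_Rot by (auto simp: fermat_rel_def little_o_t_def)
  show "symp fermat_rel"
  proof (rule sympI)
    fix x y assume "fermat_rel x y"
    then show "fermat_rel y x"
      unfolding fermat_rel_def little_o_t_def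
      using tendsto_minus[of "\<lambda>t. (x t - y t) / t" 0 "at_right 0"]
      by (auto simp: minus_divide_left)
  qed
  show "transp fermat_rel"
  proof (rule transpI)
    fix x y z assume "fermat_rel x y" "fermat_rel y z"
    then show "fermat_rel x z"
      unfolding fermat_rel_def little_o_t_def
      using tendsto_add[of "\<lambda>t. (x t - y t) / t" 0 "at_right 0" "\<lambda>t. (y t - z t) / t" 0]
      by (auto simp: add_divide_distrib[symmetric])
  qed
qed

quotient_type fermat = "real \<Rightarrow> real" / partial: fermat_rel
  by (rule fermat_rel_part_equivp)

definition fzero :: fermat where "fzero = abs_fermat (\<lambda>t. 0)"

definition fstd :: "fermat \<Rightarrow> real" where "fstd x = rep_fermat x 0"

definition fle :: "fermat \<Rightarrow> fermat \<Rightarrow> bool" where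
  "fle x y \<longleftrightarrow> (\<exists>z. fermat_rel z (\<lambda>t. 0) \<and>
      (\<exists>\<delta>>0. \<forall>t. 0 \<le> t \<and> t < \<delta> \<longrightarrow> rep_fermat x t \<le> rep_fermat y t + z t))"

definition flt :: "fermat \<Rightarrow> fermat \<Rightarrow> bool" where
  "flt x y \<longleftrightarrow> fle x y \<and> x \<noteq> y"

datatype fext = NInf | Fin fermat | PInf

fun fext_le :: "fext \<Rightarrow> fext \<Rightarrow> bool" where
  "fext_le NInf _ = True"
| "fext_le (Fin x) NInf = False"
| "fext_le (Fin x) (Fin y) = fle x y"
| "fext_le (Fin x) PInf = True"
| "fext_le PInf y = (y = PInf)"

definition fext_lt :: "fext \<Rightarrow> fext \<Rightarrow> bool" where
  "fext_lt a b \<longleftrightarrow> fext_le a b \<and> a \<noteq> b"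

fun fext_std :: "fext \<Rightarrow> ereal" where
  "fext_std NInf = -\<infinity>"
| "fext_std (Fin x) = ereal (fstd x)"
| "fext_std PInf = \<infinity>"

definition finterval :: "bool \<Rightarrow> fext \<Rightarrow> fext \<Rightarrow> bool \<Rightarrow> fermat set" where
  "finterval lc a b rc = {x. (if lc then fext_le a (Fin x) else fext_lt a (Fin x)) \<and>
                             (if rc then fext_le (Fin x) b else fext_lt (Fin x) b)}"

text \<open>Interior of the interval in the Fermat topology.\<close>
definition finterval_int :: "fext \<Rightarrow> fext \<Rightarrow> fermat set" where
  "finterval_int a b = {x. fext_std a < ereal (fstd x) \<and> ereal (fstd x) < fext_std b}"

text \<open>R^N is modelled as the functions nat \<Rightarrow> real vanishing from index N on.\<close>
definition RN :: "nat \<Rightarrow> (nat \<Rightarrow> real) set" where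
  "RN N = {q. \<forall>i\<ge>N. q i = 0}"

definition distN :: "nat \<Rightarrow> (nat \<Rightarrow> real) \<Rightarrow> (nat \<Rightarrow> real) \<Rightarrow> real" where
  "distN N q q' = sqrt (\<Sum>i<N. (q i - q' i)\<^sup>2)"

definition openN :: "nat \<Rightarrow> (nat \<Rightarrow> real) set \<Rightarrow> bool" where
  "openN N U \<longleftrightarrow> U \<subseteq> RN N \<and>
     (\<forall>q\<in>U. \<exists>e>0. \<forall>q'\<in>RN N. distN N q q' < e \<longrightarrow> q' \<in> U)"

definition continuousN :: "nat \<Rightarrow> (nat \<Rightarrow> real) set \<Rightarrow> ((nat \<Rightarrow> real) \<Rightarrow> real) \<Rightarrow> bool" where
  "continuousN N U g \<longleftrightarrow>
     (\<forall>q\<in>U. \<forall>e>0. \<exists>d>0. \<forall>q'\<in>U. distN N q q' < d \<longrightarrow> \<bar>g q' - g q\<bar> < e)"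

definition has_partial :: "nat \<Rightarrow> ((nat \<Rightarrow> real) \<Rightarrow> real) \<Rightarrow> (nat \<Rightarrow> real) \<Rightarrow> real \<Rightarrow> bool" where
  "has_partial i g q d \<longleftrightarrow> ((\<lambda>h. g (q(i := q i + h))) has_real_derivative d) (at 0)"

definition partial :: "nat \<Rightarrow> ((nat \<Rightarrow> real) \<Rightarrow> real) \<Rightarrow> (nat \<Rightarrow> real) \<Rightarrow> real" where
  "partial i g q = deriv (\<lambda>h. g (q(i := q i + h))) 0"

fun CkN :: "nat \<Rightarrow> nat \<Rightarrow> (nat \<Rightarrow> real) set \<Rightarrow> ((nat \<Rightarrow> real) \<Rightarrow> real) \<Rightarrow> bool" where
  "CkN 0 N U g = continuousN N U g"
| "CkN (Suc k) N U g = (continuousN N U g \<and>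
      (\<forall>i<N. \<forall>q\<in>U. \<exists>d. has_partial i g q d) \<and>
      (\<forall>i<N. CkN k N U (partial i g)))"

definition smoothN :: "nat \<Rightarrow> (nat \<Rightarrow> real) set \<Rightarrow> ((nat \<Rightarrow> real) \<Rightarrow> real) \<Rightarrow> bool" where
  "smoothN N U g \<longleftrightarrow> openN N U \<and> (\<forall>k. CkN k N U g)"

text \<open>Parameters p \<in> Fermat-R^N: functions nat \<Rightarrow> fermat with p i = 0 for i \<ge> N.
  The point (q, y) \<in> R^N \<times> R is encoded as the element of R^(N+1) with coordinate N equal to y.\<close>
definition pair_pt :: "nat \<Rightarrow> (nat \<Rightarrow> real) \<Rightarrow> real \<Rightarrow> (nat \<Rightarrow> real)" where
  "pair_pt N q y = (\<lambda>i. if i < N then q i else if i = N then y else 0)"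

definition prod_dom :: "nat \<Rightarrow> (nat \<Rightarrow> real) set \<Rightarrow> real set \<Rightarrow> (nat \<Rightarrow> real) set" where
  "prod_dom N P V = {pair_pt N q y | q y. q \<in> P \<and> y \<in> V}"

definition fext_fun :: "nat \<Rightarrow> ((nat \<Rightarrow> real) \<Rightarrow> real) \<Rightarrow> (nat \<Rightarrow> fermat) \<Rightarrow> fermat \<Rightarrow> fermat" where
  "fext_fun N g p y = abs_fermat (\<lambda>t. g (pair_pt N (\<lambda>i. rep_fermat (p i) t) (rep_fermat y t)))"

definition fstd_vec :: "nat \<Rightarrow> (nat \<Rightarrow> fermat) \<Rightarrow> (nat \<Rightarrow> real)" where
  "fstd_vec N p = (\<lambda>i. if i < N then fstd (p i) else 0)"

definition local_repr ::
  "fermat set \<Rightarrow> (fermat \<Rightarrow> fermat) \<Rightarrow> fermat \<Rightarrow> real set \<Rightarrow> nat \<Rightarrow> (nat \<Rightarrow> real) set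
     \<Rightarrow> (nat \<Rightarrow> fermat) \<Rightarrow> ((nat \<Rightarrow> real) \<Rightarrow> real) \<Rightarrow> bool" where
  "local_repr S f x V N P p g \<longleftrightarrow>
     open V \<and> fstd x \<in> V \<and> openN N P \<and> (\<forall>i\<ge>N. p i = fzero) \<and> fstd_vec N p \<in> P \<and>
     smoothN (Suc N) (prod_dom N P V) g \<and>
     (\<forall>y\<in>S. fstd y \<in> V \<longrightarrow> f y = fext_fun N g p y)"

definition fsmooth :: "fermat set \<Rightarrow> (fermat \<Rightarrow> fermat) \<Rightarrow> bool" where
  "fsmooth S f \<longleftrightarrow> (\<forall>x\<in>S. \<exists>V N P p g. local_repr S f x V N P p g)"

definition fderiv :: "fermat set \<Rightarrow> (fermat \<Rightarrow> fermat) \<Rightarrow> fermat \<Rightarrow> fermat" where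
  "fderiv S f x = (SOME d. \<exists>V N P p g. local_repr S f x V N P p g \<and>
                                     d = fext_fun N (partial N g) p x)"

end

theory Submission
  imports Defs
begin

text \<open>A local representation writes f(y) = [g(p_t, y_t)]. Expanding g(p_t, \<sigma>) by Taylor's
  formula in the parameters gives, uniformly for standard \<sigma> near a given point, an expansion
  \<Sum> c_e(\<sigma>) t^e + o(t) with continuous coefficients c_e. If a function of (t, \<sigma>) is o(t) at
  every \<sigma> of an interval, integrating the expansion of its \<sigma>-derivative shows that the
  coefficients of that expansion with e \<le> 1 vanish, so the derivative is uniformly o(t).
  Comparing with the representation chosen by fderiv, this makes \<partial>g(p_t, \<sigma>) = o(t) at the
  standard interior points, and iterating, all higher \<sigma>-derivatives too; continuity of the
  coefficients extends this to the standard points at the ends. Taylor's formula in \<sigma> and the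
  mean value theorem then give f(x) = f(\<sigma>) for standard interior \<sigma> close to the standard part
  of x, so \<sigma> \<mapsto> f(\<sigma>) is locally constant on the connected standard interior, and every value of
  f is one of its values.\<close>

lemma little_o_t_iff:
  "little_o_t h \<longleftrightarrow> (\<forall>e>0. eventually (\<lambda>t. \<bar>h t\<bar> \<le> e * t) (at_right 0))"
proof
  assume "little_o_t h"
  show "\<forall>e>0. eventually (\<lambda>t. \<bar>h t\<bar> \<le> e * t) (at_right 0)"
  proof (intro allI impI)
    fix e :: real assume "e > 0"
    with \<open>little_o_t h\<close> have "eventually (\<lambda>t. dist (h t / t) 0 < e) (at_right 0)"
      unfolding little_o_t_def by (rule tendstoD)
    with eventually_at_right_less[of "0::real"]
    show "eventually (\<lambda>t. \<bar>h t\<bar> \<le> e * t) (at_right 0)"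
      by eventually_elim (auto simp: abs_divide field_simps)
  qed
next
  assume o: "\<forall>e>0. eventually (\<lambda>t. \<bar>h t\<bar> \<le> e * t) (at_right 0)"
  show "little_o_t h" unfolding little_o_t_def
  proof (rule tendstoI)
    fix e :: real assume "e > 0"
    then have "e / 2 > 0" by simp
    with o have "eventually (\<lambda>t. \<bar>h t\<bar> \<le> e / 2 * t) (at_right 0)" by blast
    with eventually_at_right_less[of "0::real"]
    show "eventually (\<lambda>t. dist (h t / t) 0 < e) (at_right 0)"
    proof eventually_elim
      case (elim t)
      then have "\<bar>h t\<bar> / t \<le> e / 2" by (simp add: divide_le_eq mult.commute)
      then have "\<bar>h t\<bar> / t < e" using \<open>e > 0\<close> by linarith
      then show ?case using elim \<open>e > 0\<close> by (simp add: abs_divide)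
    qed
  qed
qed

lemma little_o_tD: "little_o_t f \<Longrightarrow> e > 0 \<Longrightarrow> eventually (\<lambda>t. \<bar>f t\<bar> \<le> e * t) (at_right 0)"
  unfolding little_o_t_iff by blast

lemma eventually_at_right_0_pos: "eventually (\<lambda>t. t > 0) (at_right (0::real))"
  by (rule eventually_at_right_less)

lemma eventually_at_right_0_le: "c > 0 \<Longrightarrow> eventually (\<lambda>t. t \<le> c) (at_right (0::real))"
  unfolding eventually_at_right_field by (intro exI[of _ c]) auto

lemma tendsto_powr_at_right_0: "b > 0 \<Longrightarrow> ((\<lambda>t. t powr b) \<longlongrightarrow> 0) (at_right (0::real))"
  using tendsto_powr2[of "\<lambda>t. t" 0 "at_right 0" "\<lambda>_. b" b, OF tendsto_ident_at tendsto_const]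
    eventually_mono[OF eventually_at_right_0_pos, of "\<lambda>t. 0 \<le> t"]
  by simp

lemma little_o_t_tendsto_0: "little_o_t f \<Longrightarrow> (f \<longlongrightarrow> 0) (at_right 0)"
proof -
  assume "little_o_t f"
  then have "((\<lambda>t. f t / t * t) \<longlongrightarrow> 0 * 0) (at_right 0)"
    unfolding little_o_t_def by (intro tendsto_mult) (auto intro: tendsto_ident_at)
  moreover have "eventually (\<lambda>t. f t / t * t = f t) (at_right 0)"
    using eventually_at_right_0_pos by eventually_elim auto
  ultimately show ?thesis by (simp add: tendsto_cong)
qed

lemma little_o_t_powr: "b > 1 \<Longrightarrow> little_o_t (\<lambda>t. c * t powr b)"
  unfolding little_o_t_iff
proof (intro allI impI)
  fix e :: real assume "b > 1" "e > 0"
  then have "eventually (\<lambda>t. dist (t powr (b - 1)) 0 < e / (\<bar>c\<bar> + 1)) (at_right 0)"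
    by (intro tendstoD[OF tendsto_powr_at_right_0]) (auto simp: add_pos_nonneg)
  with eventually_at_right_0_pos
  show "eventually (\<lambda>t. \<bar>c * t powr b\<bar> \<le> e * t) (at_right 0)"
  proof eventually_elim
    case (elim t)
    have "\<bar>c * t powr b\<bar> = \<bar>c\<bar> * t powr (b - 1) * t" using elim by (simp add: abs_mult powr_diff)
    also have "\<dots> \<le> (\<bar>c\<bar> + 1) * (e / (\<bar>c\<bar> + 1)) * t"
      using elim by (intro mult_right_mono mult_mono) auto
    finally show ?case by simp
  qed
qed

definition unif_o_t :: "(real \<Rightarrow> real \<Rightarrow> real) \<Rightarrow> real set \<Rightarrow> bool" where
  "unif_o_t D S \<longleftrightarrow> (\<forall>e>0. eventually (\<lambda>t. \<forall>\<sigma>\<in>S. \<bar>D t \<sigma>\<bar> \<le> e * t) (at_right 0))"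

lemma little_o_t_iff_unif_o_t: "little_o_t f \<longleftrightarrow> unif_o_t (\<lambda>t _. f t) UNIV"
  by (simp add: little_o_t_iff unif_o_t_def)

lemma unif_o_tD: "unif_o_t D S \<Longrightarrow> e > 0 \<Longrightarrow> eventually (\<lambda>t. \<forall>\<sigma>\<in>S. \<bar>D t \<sigma>\<bar> \<le> e * t) (at_right 0)"
  unfolding unif_o_t_def by blast

lemma unif_o_t_imp_little_o_t: "unif_o_t D S \<Longrightarrow> \<sigma> \<in> S \<Longrightarrow> little_o_t (\<lambda>t. D t \<sigma>)"
  unfolding little_o_t_iff unif_o_t_def by (blast intro: eventually_mono)

lemma unif_o_t_subset: "unif_o_t D S \<Longrightarrow> S' \<subseteq> S \<Longrightarrow> unif_o_t D S'"
  unfolding unif_o_t_def by (blast intro: eventually_mono)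

lemma unif_o_t_zero: "unif_o_t (\<lambda>t \<sigma>. 0) S"
  unfolding unif_o_t_def by (auto intro: eventually_mono[OF eventually_at_right_0_pos])

lemma unif_o_t_add:
  assumes "unif_o_t D1 S" "unif_o_t D2 S"
  shows "unif_o_t (\<lambda>t \<sigma>. D1 t \<sigma> + D2 t \<sigma>) S"
  unfolding unif_o_t_def
proof (intro allI impI)
  fix e :: real assume "e > 0"
  then have "e / 2 > 0" by simp
  from unif_o_tD[OF assms(1) this] unif_o_tD[OF assms(2) this]
  show "eventually (\<lambda>t. \<forall>\<sigma>\<in>S. \<bar>D1 t \<sigma> + D2 t \<sigma>\<bar> \<le> e * t) (at_right 0)"
  proof eventually_elim
    case (elim t)
    show ?case
    proof
      fix \<sigma> assume "\<sigma> \<in> S"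
      then show "\<bar>D1 t \<sigma> + D2 t \<sigma>\<bar> \<le> e * t"
        using elim abs_triangle_ineq[of "D1 t \<sigma>" "D2 t \<sigma>"] by fastforce
    qed
  qed
qed

lemma unif_o_t_dominated:
  assumes "unif_o_t D S" "eventually (\<lambda>t. \<forall>\<sigma>\<in>S. \<bar>D' t \<sigma>\<bar> \<le> \<bar>D t \<sigma>\<bar>) (at_right 0)"
  shows "unif_o_t D' S"
  unfolding unif_o_t_def
proof (intro allI impI)
  fix e :: real assume "e > 0"
  from unif_o_tD[OF assms(1) this] assms(2)
  show "eventually (\<lambda>t. \<forall>\<sigma>\<in>S. \<bar>D' t \<sigma>\<bar> \<le> e * t) (at_right 0)"
    by eventually_elim (meson order_trans)
qed

lemma unif_o_t_mult_bounded:
  assumes "unif_o_t D S" "eventually (\<lambda>t. \<forall>\<sigma>\<in>S. \<bar>g t \<sigma>\<bar> \<le> M) (at_right 0)"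
  shows "unif_o_t (\<lambda>t \<sigma>. g t \<sigma> * D t \<sigma>) S"
  unfolding unif_o_t_def
proof (intro allI impI)
  fix e :: real assume "e > 0"
  then have "e / (\<bar>M\<bar> + 1) > 0" by (simp add: add_pos_nonneg)
  from unif_o_tD[OF assms(1) this] assms(2)
  show "eventually (\<lambda>t. \<forall>\<sigma>\<in>S. \<bar>g t \<sigma> * D t \<sigma>\<bar> \<le> e * t) (at_right 0)"
  proof eventually_elim
    case (elim t)
    show ?case
    proof
      fix \<sigma> assume "\<sigma> \<in> S"
      then have "\<bar>g t \<sigma> * D t \<sigma>\<bar> \<le> (\<bar>M\<bar> + 1) * (e / (\<bar>M\<bar> + 1) * t)"
        using elim unfolding abs_mult by (intro mult_mono) auto
      then show "\<bar>g t \<sigma> * D t \<sigma>\<bar> \<le> e * t" by simp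
    qed
  qed
qed

lemma unif_o_t_cmult: "unif_o_t D S \<Longrightarrow> unif_o_t (\<lambda>t \<sigma>. c * D t \<sigma>) S"
  using unif_o_t_mult_bounded[of D S "\<lambda>_ _. c" "\<bar>c\<bar>"] by simp

lemma unif_o_t_diff: "unif_o_t D1 S \<Longrightarrow> unif_o_t D2 S \<Longrightarrow> unif_o_t (\<lambda>t \<sigma>. D1 t \<sigma> - D2 t \<sigma>) S"
  using unif_o_t_add[of D1 S "\<lambda>t \<sigma>. (-1) * D2 t \<sigma>"] unif_o_t_cmult[of D2 S "-1"] by simp

lemma unif_o_t_sum: "finite I \<Longrightarrow> (\<forall>m\<in>I. unif_o_t (D m) S) \<Longrightarrow> unif_o_t (\<lambda>t \<sigma>. \<Sum>m\<in>I. D m t \<sigma>) S"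
  by (induction I rule: finite_induct) (auto simp: unif_o_t_zero intro: unif_o_t_add)

lemma unif_o_t_powr_bound:
  assumes "c > 1" "eventually (\<lambda>t. \<forall>\<sigma>\<in>S. \<bar>R t \<sigma>\<bar> \<le> C * t powr c) (at_right 0)"
  shows "unif_o_t R S"
proof (rule unif_o_t_dominated[of "\<lambda>t _. C * t powr c"])
  show "unif_o_t (\<lambda>t _. C * t powr c) S"
    using little_o_t_powr[OF assms(1)] unfolding little_o_t_iff_unif_o_t
      by (rule unif_o_t_subset) simp
  show "eventually (\<lambda>t. \<forall>\<sigma>\<in>S. \<bar>R t \<sigma>\<bar> \<le> \<bar>C * t powr c\<bar>) (at_right 0)"
    using assms(2) by eventually_elim force
qed

lemma little_o_t_zero [simp]: "little_o_t (\<lambda>t. 0)"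
  unfolding little_o_t_iff_unif_o_t by (rule unif_o_t_zero)

lemma little_o_t_add: "little_o_t f \<Longrightarrow> little_o_t g \<Longrightarrow> little_o_t (\<lambda>t. f t + g t)"
  unfolding little_o_t_iff_unif_o_t by (rule unif_o_t_add)

lemma little_o_t_diff: "little_o_t f \<Longrightarrow> little_o_t g \<Longrightarrow> little_o_t (\<lambda>t. f t - g t)"
  unfolding little_o_t_iff_unif_o_t by (rule unif_o_t_diff)

lemma little_o_t_cmult: "little_o_t f \<Longrightarrow> little_o_t (\<lambda>t. c * f t)"
  unfolding little_o_t_iff_unif_o_t by (rule unif_o_t_cmult)

lemma little_o_t_mult_bounded:
  "little_o_t f \<Longrightarrow> eventually (\<lambda>t. \<bar>g t\<bar> \<le> M) (at_right 0) \<Longrightarrow> little_o_t (\<lambda>t. g t * f t)"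
  unfolding little_o_t_iff_unif_o_t by (rule unif_o_t_mult_bounded) auto

lemma little_o_t_dominated:
  "little_o_t f \<Longrightarrow> eventually (\<lambda>t. \<bar>g t\<bar> \<le> \<bar>f t\<bar>) (at_right 0) \<Longrightarrow> little_o_t g"
  unfolding little_o_t_iff_unif_o_t by (rule unif_o_t_dominated) auto

lemma little_o_t_sum: "finite I \<Longrightarrow> (\<forall>m\<in>I. little_o_t (f m)) \<Longrightarrow> little_o_t (\<lambda>t. \<Sum>m\<in>I. f m t)"
  unfolding little_o_t_iff_unif_o_t by (rule unif_o_t_sum)

lemma little_o_t_powr_bound:
  "c > 1 \<Longrightarrow> eventually (\<lambda>t. \<bar>f t\<bar> \<le> C * t powr c) (at_right 0) \<Longrightarrow> little_o_t f"
  unfolding little_o_t_iff_unif_o_t by (rule unif_o_t_powr_bound) auto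

lemma little_o_t_mult_unif_bounded:
  assumes "little_o_t f" "eventually (\<lambda>t. \<forall>\<sigma>\<in>S. \<bar>g t \<sigma>\<bar> \<le> M) (at_right 0)"
  shows "unif_o_t (\<lambda>t \<sigma>. f t * g t \<sigma>) S"
  using unif_o_t_mult_bounded[OF unif_o_t_subset[OF assms(1)[unfolded little_o_t_iff_unif_o_t]] assms(2)]
  by (simp add: mult.commute)

lemma abs_diff_le_by_deriv_bound:
  fixes f :: "real \<Rightarrow> real"
  assumes "\<And>z. min x y \<le> z \<Longrightarrow> z \<le> max x y \<Longrightarrow> (f has_real_derivative f' z) (at z)"
    and "\<And>z. min x y \<le> z \<Longrightarrow> z \<le> max x y \<Longrightarrow> \<bar>f' z\<bar> \<le> M"
  shows "\<bar>f x - f y\<bar> \<le> M * \<bar>x - y\<bar>"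
  using field_differentiable_bound[of "{min x y..max x y}" f f' M x y] assms
  by (auto intro: has_field_derivative_at_within)

lemma little_o_t_diff_by_unif_derivative:
  assumes der: "eventually (\<lambda>t. \<forall>z\<in>{min \<sigma> s..max \<sigma> s}.
      (F t has_real_derivative F' t z) (at z)) (at_right 0)"
    and o: "unif_o_t F' {min \<sigma> s..max \<sigma> s}"
  shows "little_o_t (\<lambda>t. F t \<sigma> - F t s)"
  unfolding little_o_t_iff
proof (intro allI impI)
  fix e :: real assume e: "e > 0"
  define e' where "e' = e / (\<bar>\<sigma> - s\<bar> + 1)"
  have "e' > 0" using e by (simp add: e'_def add_pos_nonneg)
  from unif_o_tD[OF o this] der eventually_at_right_0_pos
  show "eventually (\<lambda>t. \<bar>F t \<sigma> - F t s\<bar> \<le> e * t) (at_right 0)"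
  proof eventually_elim
    case (elim t)
    have "\<bar>F t \<sigma> - F t s\<bar> \<le> (e' * t) * \<bar>\<sigma> - s\<bar>"
      by (rule abs_diff_le_by_deriv_bound) (use elim in auto)
    also have "\<dots> = e * t * (\<bar>\<sigma> - s\<bar> / (\<bar>\<sigma> - s\<bar> + 1))" by (simp add: e'_def)
    also have "\<dots> \<le> e * t * 1" using e elim(3) by (intro mult_left_mono) auto
    finally show ?case by simp
  qed
qed

definition powsum :: "(real \<times> real) list \<Rightarrow> real \<Rightarrow> real" where
  "powsum L t = (\<Sum>p\<leftarrow>L. fst p * t powr snd p)"

definition nonneg_exps :: "(real \<times> real) list \<Rightarrow> bool" where
  "nonneg_exps L \<longleftrightarrow> (\<forall>p\<in>set L. snd p \<ge> 0)"

definition mult_terms :: "(real \<times> real) list \<Rightarrow> (real \<times> real) list \<Rightarrow> (real \<times> real) list" where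
  "mult_terms L1 L2 = concat (map (\<lambda>p. map (\<lambda>q. (fst p * fst q, snd p + snd q)) L2) L1)"

lemma powsum_Nil[simp]: "powsum [] t = 0" by (simp add: powsum_def)
lemma powsum_Cons[simp]: "powsum (p # L) t = fst p * t powr snd p + powsum L t"
  by (simp add: powsum_def)
lemma powsum_append[simp]: "powsum (L1 @ L2) t = powsum L1 t + powsum L2 t"
  by (simp add: powsum_def)

lemma powsum_mult_terms: "t > 0 \<Longrightarrow> powsum (mult_terms L1 L2) t = powsum L1 t * powsum L2 t"
proof (induction L1)
  case Nil thus ?case by (simp add: mult_terms_def)
next
  case (Cons p L1)
  have "powsum (map (\<lambda>q. (fst p * fst q, snd p + snd q)) L2) t = fst p * t powr snd p * powsum L2 t"
    by (induction L2) (auto simp: powr_add algebra_simps)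
  thus ?case using Cons by (simp add: mult_terms_def algebra_simps)
qed

lemma nonneg_exps_mult_terms: "nonneg_exps L1 \<Longrightarrow> nonneg_exps L2 \<Longrightarrow> nonneg_exps (mult_terms L1 L2)"
  by (auto simp: nonneg_exps_def mult_terms_def)

lemma powsum_bounded: "nonneg_exps L \<Longrightarrow> eventually (\<lambda>t. \<bar>powsum L t\<bar> \<le> (\<Sum>p\<leftarrow>L. \<bar>fst p\<bar>)) (at_right 0)"
proof -
  assume nn: "nonneg_exps L"
  have "eventually (\<lambda>t. t \<le> 1) (at_right (0::real))" by (rule eventually_at_right_0_le) simp
  thus ?thesis using eventually_at_right_0_pos
  proof eventually_elim
    case (elim t)
    have "\<bar>powsum L t\<bar> \<le> (\<Sum>p\<leftarrow>L. \<bar>fst p\<bar>)" using nn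
    proof (induction L)
      case Nil thus ?case by simp
    next
      case (Cons p L)
      have "t powr snd p \<le> t powr 0" using elim Cons.prems
        by (intro powr_mono') (auto simp: nonneg_exps_def)
      hence "t powr snd p \<le> 1" using elim by simp
      hence "\<bar>fst p * t powr snd p\<bar> \<le> \<bar>fst p\<bar>" using elim
        by (simp add: abs_mult mult_left_le)
      moreover have "\<bar>powsum L t\<bar> \<le> (\<Sum>p\<leftarrow>L. \<bar>fst p\<bar>)" using Cons by (auto simp: nonneg_exps_def)
      ultimately show ?case by (simp add: abs_triangle_ineq order_trans[OF abs_triangle_ineq] add_mono)
    qed
    thus ?case .
  qed
qed

definition powsum_approx :: "(real \<Rightarrow> real) \<Rightarrow> bool" where
  "powsum_approx x \<longleftrightarrow> (\<exists>L. nonneg_exps L \<and> little_o_t (\<lambda>t. x t - powsum L t))"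

lemma powsum_approxE:
  assumes "powsum_approx x"
  obtains L where "nonneg_exps L" "little_o_t (\<lambda>t. x t - powsum L t)"
  using assms unfolding powsum_approx_def by blast

lemma powsum_approx_bounded: "powsum_approx x \<Longrightarrow> \<exists>M. eventually (\<lambda>t. \<bar>x t\<bar> \<le> M) (at_right 0)"
proof -
  assume "powsum_approx x"
  then obtain L where L: "nonneg_exps L" "little_o_t (\<lambda>t. x t - powsum L t)"
    by (rule powsum_approxE)
  have "eventually (\<lambda>t. \<bar>x t - powsum L t\<bar> \<le> 1 * t) (at_right 0)" using L(2)
    by (rule little_o_tD) simp
  with powsum_bounded[OF L(1)] eventually_at_right_0_le[OF zero_less_one]
  have "eventually (\<lambda>t. \<bar>x t\<bar> \<le> (\<Sum>p\<leftarrow>L. \<bar>fst p\<bar>) + 1) (at_right 0)"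
    by eventually_elim linarith
  then show ?thesis by blast
qed

lemma powsum_approx_mult:
  assumes x: "powsum_approx x" and y: "powsum_approx y"
  shows "powsum_approx (\<lambda>t. x t * y t)"
proof -
  obtain L1 where L1: "nonneg_exps L1" "little_o_t (\<lambda>t. x t - powsum L1 t)" using x
    by (rule powsum_approxE)
  obtain L2 where L2: "nonneg_exps L2" "little_o_t (\<lambda>t. y t - powsum L2 t)" using y
    by (rule powsum_approxE)
  obtain M where M: "eventually (\<lambda>t. \<bar>y t\<bar> \<le> M) (at_right 0)" using powsum_approx_bounded[OF y]
    by blast
  have "little_o_t (\<lambda>t. y t * (x t - powsum L1 t) + powsum L1 t * (y t - powsum L2 t))"
    by (intro little_o_t_add little_o_t_mult_bounded[OF L1(2) M]
        little_o_t_mult_bounded[OF L2(2) powsum_bounded[OF L1(1)]])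
  then have "little_o_t (\<lambda>t. x t * y t - powsum (mult_terms L1 L2) t)"
    by (rule little_o_t_dominated, intro eventually_mono[OF eventually_at_right_0_pos])
      (simp add: powsum_mult_terms algebra_simps)
  then show ?thesis using nonneg_exps_mult_terms[OF L1(1) L2(1)] by (auto simp: powsum_approx_def)
qed

lemma powsum_approx_const: "powsum_approx (\<lambda>t. c)"
proof -
  have "little_o_t (\<lambda>t. c - powsum [(c, 0)] t)"
    by (rule little_o_t_dominated[OF little_o_t_zero], intro eventually_mono[OF eventually_at_right_0_pos]) simp
  then show ?thesis unfolding powsum_approx_def nonneg_exps_def by (intro exI[of _ "[(c, 0)]"]) auto
qed

lemma powsum_approx_add:
  assumes x: "powsum_approx x" and y: "powsum_approx y"
  shows "powsum_approx (\<lambda>t. x t + y t)"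
proof -
  obtain L1 where L1: "nonneg_exps L1" "little_o_t (\<lambda>t. x t - powsum L1 t)" using x
    by (rule powsum_approxE)
  obtain L2 where L2: "nonneg_exps L2" "little_o_t (\<lambda>t. y t - powsum L2 t)" using y
    by (rule powsum_approxE)
  have "little_o_t (\<lambda>t. x t + y t - powsum (L1 @ L2) t)"
    using little_o_t_add[OF L1(2) L2(2)] by (simp add: algebra_simps)
  moreover have "nonneg_exps (L1 @ L2)" using L1(1) L2(1) by (auto simp: nonneg_exps_def)
  ultimately show ?thesis by (auto simp: powsum_approx_def)
qed

lemma powsum_approx_diff: "powsum_approx x \<Longrightarrow> powsum_approx y \<Longrightarrow> powsum_approx (\<lambda>t. x t - y t)"
  using powsum_approx_add[of x "\<lambda>t. (-1) * y t"] powsum_approx_mult[OF powsum_approx_const[of "-1"]]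
  by simp

lemma powsum_approx_power: "powsum_approx x \<Longrightarrow> powsum_approx (\<lambda>t. x t ^ k)"
  by (induction k) (auto intro: powsum_approx_mult powsum_approx_const)

lemma tpow_pos: "t > 0 \<Longrightarrow> tpow t a = t powr a"
  by (simp add: tpow_def)

lemma tpow_tendsto: "a \<ge> 0 \<Longrightarrow> ((\<lambda>t. tpow t a) \<longlongrightarrow> tpow 0 a) (at_right 0)"
proof (cases "a = 0")
  case True thus ?thesis by (simp add: tpow_def)
next
  case False
  assume "a \<ge> 0" hence "a > 0" using False by simp
  have "((\<lambda>t. t powr a) \<longlongrightarrow> 0) (at_right 0)" by (rule tendsto_powr_at_right_0) fact
  thus ?thesis using False by (simp add: tpow_def)
qed

lemma RotE:
  assumes "x \<in> Rot"
  obtains k r \<alpha> a h where "\<forall>i<(k::nat). 0 \<le> a i" "h 0 = 0" "little_o_t h"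
    "\<forall>t\<ge>0. x t = r + (\<Sum>i<k. \<alpha> i * tpow t (a i)) + h t"
  using assms unfolding Rot_def mem_Collect_eq
  by (elim exE conjE) (rule that; assumption)

lemma RotI:
  assumes "\<forall>i<(k::nat). 0 \<le> a i" "h 0 = 0" "little_o_t h"
    "\<forall>t\<ge>0. x t = r + (\<Sum>i<k. \<alpha> i * tpow t (a i)) + h t"
  shows "x \<in> Rot"
  unfolding Rot_def mem_Collect_eq
  using assms by (intro exI[of _ k] exI[of _ r] exI[of _ \<alpha>] exI[of _ a] exI[of _ h]) simp

lemma Rot_tendsto: "x \<in> Rot \<Longrightarrow> (x \<longlongrightarrow> x 0) (at_right 0)"
proof -
  assume "x \<in> Rot"
  then obtain k r \<alpha> a h where R: "\<forall>i<(k::nat). 0 \<le> a i" "h 0 = 0" "little_o_t h"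
    "\<forall>t\<ge>0. x t = r + (\<Sum>i<k. \<alpha> i * tpow t (a i)) + h t" by (rule RotE)
  have "((\<lambda>t. r + (\<Sum>i<k. \<alpha> i * tpow t (a i)) + h t) \<longlongrightarrow> r + (\<Sum>i<k. \<alpha> i * tpow 0 (a i)) + 0) (at_right 0)"
    using R(1) by (intro tendsto_intros tpow_tendsto little_o_t_tendsto_0 R(3)) auto
  moreover have "x 0 = r + (\<Sum>i<k. \<alpha> i * tpow 0 (a i)) + 0" using R by simp
  moreover have "eventually (\<lambda>t. r + (\<Sum>i<k. \<alpha> i * tpow t (a i)) + h t = x t) (at_right 0)"
    using eventually_at_right_0_pos by eventually_elim (use R(4) in auto)
  ultimately show ?thesis by (simp add: tendsto_cong)
qed

lemma tendsto_at_right_0_unique: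
  "(f \<longlongrightarrow> a) (at_right (0::real)) \<Longrightarrow> (f \<longlongrightarrow> b) (at_right 0) \<Longrightarrow> a = (b::real)"
  using tendsto_unique[of "at_right (0::real)" f a b] by simp

lemma Rot_little_o_t_eq_at_0: "x \<in> Rot \<Longrightarrow> y \<in> Rot \<Longrightarrow> little_o_t (\<lambda>t. x t - y t) \<Longrightarrow> x 0 = y 0"
proof -
  assume x: "x \<in> Rot" and y: "y \<in> Rot" and l: "little_o_t (\<lambda>t. x t - y t)"
  have "((\<lambda>t. x t - y t) \<longlongrightarrow> x 0 - y 0) (at_right 0)"
    by (rule tendsto_diff[OF Rot_tendsto[OF x] Rot_tendsto[OF y]])
  from tendsto_at_right_0_unique[OF this little_o_t_tendsto_0[OF l]] have "x 0 - y 0 = 0" .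
  thus ?thesis by simp
qed

lemma Rot_little_o_t_perturb: "y \<in> Rot \<Longrightarrow> x 0 = y 0 \<Longrightarrow> little_o_t (\<lambda>t. x t - y t) \<Longrightarrow> x \<in> Rot"
proof -
  assume y: "y \<in> Rot" and e: "x 0 = y 0" and l: "little_o_t (\<lambda>t. x t - y t)"
  obtain k r \<alpha> a h where R: "\<forall>i<(k::nat). 0 \<le> a i" "h 0 = 0" "little_o_t h"
    "\<forall>t\<ge>0. y t = r + (\<Sum>i<k. \<alpha> i * tpow t (a i)) + h t" using y by (rule RotE)
  show "x \<in> Rot"
  proof (rule RotI[where h="\<lambda>t. h t + (x t - y t)"])
    show "\<forall>i<k. 0 \<le> a i" by fact
    show "h 0 + (x 0 - y 0) = 0" using R e by simp
    show "little_o_t (\<lambda>t. h t + (x t - y t))" by (rule little_o_t_add[OF R(3) l])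
    show "\<forall>t\<ge>0. x t = r + (\<Sum>i<k. \<alpha> i * tpow t (a i)) + (h t + (x t - y t))" using R(4) by auto
  qed
qed

lemma Rot_of_little_o_t_close:
  assumes y: "y \<in> Rot" and x: "(x \<longlongrightarrow> x 0) (at_right 0)" and xy: "little_o_t (\<lambda>t. x t - y t)"
  shows "x \<in> Rot"
proof (rule Rot_little_o_t_perturb[OF y _ xy])
  have "((\<lambda>t. x t - y t) \<longlongrightarrow> x 0 - y 0) (at_right 0)"
    by (rule tendsto_diff[OF x Rot_tendsto[OF y]])
  from tendsto_at_right_0_unique[OF this little_o_t_tendsto_0[OF xy]] show "x 0 = y 0" by simp
qed

lemma powsum_upt: "powsum (map (\<lambda>i. (\<alpha> i, a i)) [0..<(k::nat)]) t = (\<Sum>i<k. \<alpha> i * t powr a i)"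
  by (simp add: powsum_def comp_def sum_set_upt_conv_sum_list_nat[symmetric] lessThan_atLeast0)

lemma Rot_powsum_approx: "x \<in> Rot \<Longrightarrow> powsum_approx x"
proof -
  assume "x \<in> Rot"
  then obtain k r \<alpha> a h where R: "\<forall>i<(k::nat). 0 \<le> a i" "h 0 = 0" "little_o_t h"
    "\<forall>t\<ge>0. x t = r + (\<Sum>i<k. \<alpha> i * tpow t (a i)) + h t" by (rule RotE)
  define L where "L = (r,0) # map (\<lambda>i. (\<alpha> i, a i)) [0..<k]"
  have "nonneg_exps L" using R(1) by (auto simp: L_def nonneg_exps_def)
  moreover have "little_o_t (\<lambda>t. x t - powsum L t)"
  proof (rule little_o_t_dominated[OF R(3)])
    show "eventually (\<lambda>t. \<bar>x t - powsum L t\<bar> \<le> \<bar>h t\<bar>) (at_right 0)"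
      using eventually_at_right_0_pos
    proof eventually_elim
      case (elim t)
      have "x t - powsum L t = h t" using R(4) elim by (simp add: L_def powsum_upt tpow_pos)
      thus ?case by simp
    qed
  qed
  ultimately show ?thesis by (auto simp: powsum_approx_def)
qed

lemma Rot_tpow_sum: "nonneg_exps L \<Longrightarrow> (\<lambda>t. \<Sum>i<length L. fst (L!i) * tpow t (snd (L!i))) \<in> Rot"
proof -
  assume nn: "nonneg_exps L"
  have "\<forall>i<length L. 0 \<le> snd (L!i)" using nn by (metis nonneg_exps_def nth_mem)
  thus ?thesis
    by (intro RotI[where h="\<lambda>t. 0" and r=0 and k="length L" and \<alpha>="\<lambda>i. fst (L!i)" and a="\<lambda>i. snd (L!i)"]) simp_all
qed

lemma Rot_of_powsum_approx:
  assumes "nonneg_exps L" "little_o_t (\<lambda>t. x t - powsum L t)" "(x \<longlongrightarrow> x 0) (at_right 0)"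
  shows "x \<in> Rot"
proof -
  define y where "y = (\<lambda>t. \<Sum>i<length L. fst (L!i) * tpow t (snd (L!i)))"
  have y: "y \<in> Rot" unfolding y_def by (rule Rot_tpow_sum[OF assms(1)])
  have powsum_eq: "powsum L t = y t" if "t > 0" for t
  proof -
    have "powsum L t = (\<Sum>i<length L. fst (L!i) * t powr (snd (L!i)))"
      by (simp add: powsum_def sum_list_sum_nth lessThan_atLeast0)
    thus ?thesis using that by (simp add: y_def tpow_pos)
  qed
  have "little_o_t (\<lambda>t. x t - y t)"
    by (rule little_o_t_dominated[OF assms(2)]) (rule eventually_mono[OF eventually_at_right_0_pos], simp add: powsum_eq)
  then show ?thesis by (rule Rot_of_little_o_t_close[OF y assms(3)])
qed

lemma Rot_powr_bound:
  assumes "x \<in> Rot"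
  shows "\<exists>K a. a > 0 \<and> eventually (\<lambda>t. \<bar>x t - x 0\<bar> \<le> K * t powr a) (at_right 0)"
proof -
  obtain k r \<alpha> a h where R: "\<forall>i<(k::nat). 0 \<le> a i" "h 0 = 0" "little_o_t h"
    "\<forall>t\<ge>0. x t = r + (\<Sum>i<k. \<alpha> i * tpow t (a i)) + h t" using assms by (rule RotE)
  define S where "S = insert 1 {a i |i. i<k \<and> a i > 0}"
  have finS: "finite S" unfolding S_def by auto
  define b where "b = Min S"
  have b1: "b \<le> 1" unfolding b_def S_def using finS S_def by (intro Min_le) auto
  have bpos: "b > 0" unfolding b_def using finS by (subst Min_gr_iff) (auto simp: S_def)
  have bai: "b \<le> a i" if "i < k" "a i > 0" for i
    unfolding b_def using finS that S_def by (intro Min_le) auto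
  define K where "K = (\<Sum>i<k. \<bar>\<alpha> i\<bar>) + 1"
  have ev1: "eventually (\<lambda>t. t \<le> 1) (at_right (0::real))" by (rule eventually_at_right_0_le) simp
  have evh: "eventually (\<lambda>t. \<bar>h t\<bar> \<le> 1 * t) (at_right 0)" by (rule little_o_tD[OF R(3)]) simp
  have "eventually (\<lambda>t. \<bar>x t - x 0\<bar> \<le> K * t powr b) (at_right 0)"
    using ev1 evh eventually_at_right_0_pos
  proof eventually_elim
    case (elim t)
    have tb: "t \<le> t powr b" using powr_mono'[of b 1 t] elim b1 by simp
    have d: "\<bar>tpow t (a i) - tpow 0 (a i)\<bar> \<le> t powr b" if "i<k" for i
    proof (cases "a i = 0")
      case True thus ?thesis using elim by (simp add: tpow_def)
    next
      case False
      hence "a i > 0" using R(1) that by force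
      hence "t powr a i \<le> t powr b" using bai[OF that] elim by (intro powr_mono') auto
      thus ?thesis using False elim by (simp add: tpow_def)
    qed
    have x0: "x 0 = r + (\<Sum>i<k. \<alpha> i * tpow 0 (a i))" using R(4)[rule_format, of 0] R(2) by simp
    have xt: "x t = r + (\<Sum>i<k. \<alpha> i * tpow t (a i)) + h t" using R(4) elim by simp
    have "x t - x 0 = (\<Sum>i<k. \<alpha> i * (tpow t (a i) - tpow 0 (a i))) + h t"
      unfolding xt x0 by (simp add: sum_subtractf right_diff_distrib)
    also have "\<bar>\<dots>\<bar> \<le> (\<Sum>i<k. \<bar>\<alpha> i\<bar> * t powr b) + t powr b"
    proof -
      have "\<bar>\<Sum>i<k. \<alpha> i * (tpow t (a i) - tpow 0 (a i))\<bar> \<le> (\<Sum>i<k. \<bar>\<alpha> i * (tpow t (a i) - tpow 0 (a i))\<bar>)"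
        by (rule sum_abs)
      also have "\<dots> \<le> (\<Sum>i<k. \<bar>\<alpha> i\<bar> * t powr b)"
        by (rule sum_mono) (auto simp: abs_mult intro!: mult_left_mono d)
      finally show ?thesis
        using elim tb abs_triangle_ineq[of "\<Sum>i<k. \<alpha> i * (tpow t (a i) - tpow 0 (a i))" "h t"]
        by linarith
    qed
    also have "\<dots> = K * t powr b" by (simp add: K_def sum_distrib_right[symmetric] algebra_simps)
    finally show ?case .
  qed
  thus ?thesis using bpos by blast
qed

lemma rep_Rot: "rep_fermat x \<in> Rot"
  using Quotient3_rep_reflp[OF Quotient3_fermat] by (auto simp: fermat_rel_def)

lemma fermat_rel_refl: "x \<in> Rot \<Longrightarrow> fermat_rel x x"
  by (simp add: fermat_rel_def)

lemma abs_fermat_eqI: "x \<in> Rot \<Longrightarrow> y \<in> Rot \<Longrightarrow> little_o_t (\<lambda>t. x t - y t) \<Longrightarrow> abs_fermat x = abs_fermat y"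
  using Quotient3_rel_abs[OF Quotient3_fermat] by (auto simp: fermat_rel_def)

lemma abs_fermat_eqD: "x \<in> Rot \<Longrightarrow> y \<in> Rot \<Longrightarrow> abs_fermat x = abs_fermat y \<Longrightarrow> little_o_t (\<lambda>t. x t - y t)"
  using Quotient3_rel[OF Quotient3_fermat, of x y] fermat_rel_refl by (auto simp: fermat_rel_def)

lemma rep_abs_fermat_little_o_t: "x \<in> Rot \<Longrightarrow> little_o_t (\<lambda>t. rep_fermat (abs_fermat x) t - x t)"
  using Quotient3_rep_abs[OF Quotient3_fermat, of x] fermat_rel_refl by (auto simp: fermat_rel_def)

lemma rep_abs_fermat_at_0: "x \<in> Rot \<Longrightarrow> rep_fermat (abs_fermat x) 0 = x 0"
  by (rule Rot_little_o_t_eq_at_0[OF rep_Rot _ rep_abs_fermat_little_o_t])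

lemma fstd_abs_fermat: "x \<in> Rot \<Longrightarrow> fstd (abs_fermat x) = x 0"
  by (simp add: fstd_def rep_abs_fermat_at_0)

lemma Rot_const: "(\<lambda>t. c) \<in> Rot"
  by (rule RotI[where k=0 and h="\<lambda>t. 0" and r=c and \<alpha>="\<lambda>i. 0" and a="\<lambda>i. 0"]) auto

definition fconst :: "real \<Rightarrow> fermat" where "fconst c = abs_fermat (\<lambda>t. c)"

lemma fstd_fconst[simp]: "fstd (fconst c) = c"
  by (simp add: fconst_def fstd_abs_fermat Rot_const)

lemma rep_fconst_little_o_t: "little_o_t (\<lambda>t. rep_fermat (fconst c) t - c)"
  using rep_abs_fermat_little_o_t[OF Rot_const] by (simp add: fconst_def)

lemma rep_fermat_tendsto_fstd: "(rep_fermat x \<longlongrightarrow> fstd x) (at_right 0)"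
  using Rot_tendsto[OF rep_Rot] by (simp add: fstd_def)

lemma fle_imp_fstd_le: "fle x y \<Longrightarrow> fstd x \<le> fstd y"
proof -
  assume "fle x y"
  then obtain z \<delta> where z: "fermat_rel z (\<lambda>t. 0)" "\<delta> > 0"
    "\<forall>t. 0 \<le> t \<and> t < \<delta> \<longrightarrow> rep_fermat x t \<le> rep_fermat y t + z t" unfolding fle_def by blast
  have zR: "z \<in> Rot" "little_o_t (\<lambda>t. z t - 0)" using z(1) by (simp_all add: fermat_rel_def)
  have "z 0 = 0" using Rot_little_o_t_eq_at_0[of z "\<lambda>t. 0", OF zR(1) Rot_const zR(2)] by simp
  moreover have "rep_fermat x 0 \<le> rep_fermat y 0 + z 0" using z(3) z(2) by simp
  ultimately show ?thesis by (simp add: fstd_def)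
qed

lemma fstd_less_imp_fle: "fstd x < fstd y \<Longrightarrow> fle x y"
proof -
  assume lt: "fstd x < fstd y"
  have "((\<lambda>t. rep_fermat y t - rep_fermat x t) \<longlongrightarrow> fstd y - fstd x) (at_right 0)"
    by (rule tendsto_diff[OF rep_fermat_tendsto_fstd rep_fermat_tendsto_fstd])
  from order_tendstoD(1)[OF this, of 0] lt
  have "eventually (\<lambda>t. 0 < rep_fermat y t - rep_fermat x t) (at_right 0)" by simp
  then obtain b where b: "b > 0" "\<forall>t>0. t < b \<longrightarrow> 0 < rep_fermat y t - rep_fermat x t"
    unfolding eventually_at_right_field by auto
  have "\<forall>t. 0 \<le> t \<and> t < b \<longrightarrow> rep_fermat x t \<le> rep_fermat y t + 0"
  proof (intro allI impI)
    fix t assume t: "0 \<le> t \<and> t < b"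
    show "rep_fermat x t \<le> rep_fermat y t + 0"
    proof (cases "t = 0")
      case True thus ?thesis using lt by (simp add: fstd_def)
    next
      case False
      have "0 < rep_fermat y t - rep_fermat x t" using b(2) t False by simp
      thus ?thesis by simp
    qed
  qed
  moreover have "fermat_rel (\<lambda>t. 0) (\<lambda>t. 0)" by (rule fermat_rel_refl[OF Rot_const])
  ultimately show ?thesis using b(1) unfolding fle_def
    by (intro exI[of _ "\<lambda>t. 0"] conjI exI[of _ b]) simp_all
qed

lemma fext_le_Fin_fext_std_left: "fext_le a (Fin x) \<Longrightarrow> fext_std a \<le> ereal (fstd x)"
  by (cases a) (auto dest: fle_imp_fstd_le)

lemma fext_le_Fin_fext_std_right: "fext_le (Fin x) b \<Longrightarrow> ereal (fstd x) \<le> fext_std b"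
  by (cases b) (auto dest: fle_imp_fstd_le)

lemma finterval_fstd_bounds:
  "x \<in> finterval lc a b rc \<Longrightarrow> fext_std a \<le> ereal (fstd x) \<and> ereal (fstd x) \<le> fext_std b"
  unfolding finterval_def fext_lt_def
  by (auto split: if_splits intro: fext_le_Fin_fext_std_left fext_le_Fin_fext_std_right)

lemma fconst_in_finterval:
  assumes "fext_std a < ereal s" "ereal s < fext_std b"
  shows "fconst s \<in> finterval lc a b rc"
proof -
  have 1: "fext_le a (Fin (fconst s)) \<and> a \<noteq> Fin (fconst s)"
  proof (cases a)
    case (Fin \<alpha>)
    hence "fstd \<alpha> < fstd (fconst s)" using assms(1) by simp
    hence "fle \<alpha> (fconst s) \<and> \<alpha> \<noteq> fconst s" using fstd_less_imp_fle by blast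
    thus ?thesis using Fin by simp
  qed (use assms(1) in simp_all)
  have 2: "fext_le (Fin (fconst s)) b \<and> Fin (fconst s) \<noteq> b"
  proof (cases b)
    case (Fin \<beta>)
    hence "fstd (fconst s) < fstd \<beta>" using assms(2) by simp
    hence "fle (fconst s) \<beta> \<and> fconst s \<noteq> \<beta>" using fstd_less_imp_fle by blast
    thus ?thesis using Fin by simp
  qed (use assms(2) in simp_all)
  show ?thesis using 1 2 unfolding finterval_def fext_lt_def by simp
qed

lemma ereal_interval_approx:
  assumes "A < B" "A \<le> ereal s0" "ereal s0 \<le> B" "\<epsilon> > 0"
  shows "\<exists>\<tau>. A < ereal \<tau> \<and> ereal \<tau> < B \<and> \<bar>\<tau> - s0\<bar> < \<epsilon>"
proof (cases "ereal s0 < B")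
  case True
  obtain z where z: "ereal s0 < ereal z" "ereal z < B" using ereal_dense2[OF True] by blast
  define \<tau> where "\<tau> = min z (s0 + \<epsilon>/2)"
  have "s0 < \<tau>" using z(1) assms(4) by (simp add: \<tau>_def)
  hence "ereal s0 < ereal \<tau>" by simp
  hence "A < ereal \<tau>" using assms(2) by (rule order_le_less_trans[rotated])
  moreover have "ereal \<tau> < B"
  proof -
    have "\<tau> \<le> z" by (simp add: \<tau>_def)
    hence "ereal \<tau> \<le> ereal z" by simp
    thus ?thesis using z(2) by (rule order_le_less_trans)
  qed
  moreover have "\<bar>\<tau> - s0\<bar> < \<epsilon>" using \<open>s0 < \<tau>\<close> assms(4) by (simp add: \<tau>_def)
  ultimately show ?thesis by blast
next
  case False
  hence eq: "ereal s0 = B" using assms(3) by simp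
  hence "A < ereal s0" using assms(1) by simp
  then obtain z where z: "A < ereal z" "ereal z < ereal s0" using ereal_dense2 by blast
  define \<tau> where "\<tau> = max z (s0 - \<epsilon>/2)"
  have "\<tau> < s0" using z(2) assms(4) by (simp add: \<tau>_def)
  hence "ereal \<tau> < ereal s0" by simp
  hence "ereal \<tau> < B" using eq by simp
  moreover have "A < ereal \<tau>"
  proof -
    have "z \<le> \<tau>" by (simp add: \<tau>_def)
    hence "ereal z \<le> ereal \<tau>" by simp
    with z(1) show ?thesis by (rule order_less_le_trans)
  qed
  moreover have "\<bar>\<tau> - s0\<bar> < \<epsilon>" using \<open>\<tau> < s0\<close> assms(4) by (simp add: \<tau>_def)
  ultimately show ?thesis by blast
qed

lemma smoothN_partial: "smoothN M U h \<Longrightarrow> i < M \<Longrightarrow> smoothN M U (partial i h)"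
  unfolding smoothN_def by (metis CkN.simps(2))

lemma smoothN_partial_iter: "smoothN M U h \<Longrightarrow> i < M \<Longrightarrow> smoothN M U ((partial i ^^ m) h)"
  by (induction m) (auto intro: smoothN_partial)

lemma smoothN_continuousN: "smoothN M U h \<Longrightarrow> continuousN M U h"
  unfolding smoothN_def by (metis CkN.simps(1))

lemma smoothN_has_partial: "smoothN M U h \<Longrightarrow> i < M \<Longrightarrow> q \<in> U \<Longrightarrow> \<exists>d. has_partial i h q d"
  unfolding smoothN_def by (metis CkN.simps(2))

lemma has_real_derivative_partial:
  assumes "smoothN M U h" "i < M" "Y(i := x) \<in> U"
  shows "((\<lambda>y. h (Y(i := y))) has_real_derivative partial i h (Y(i := x))) (at x)"
proof -
  define q where "q = Y(i := x)"
  obtain d where d: "has_partial i h q d" using smoothN_has_partial[OF assms(1,2)] assms(3) q_def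
    by blast
  have eq: "(\<lambda>e. h (q(i := q i + e))) = (\<lambda>e. h (Y(i := e + x)))"
    by (rule ext) (simp add: q_def add.commute)
  have D: "((\<lambda>e. h (Y(i := e + x))) has_real_derivative d) (at 0)"
    using d unfolding has_partial_def eq .
  have "partial i h q = d" unfolding partial_def eq using D by (rule DERIV_imp_deriv)
  moreover have "((\<lambda>y. h (Y(i := y))) has_real_derivative d) (at (0 + x))"
    using D DERIV_shift[of "\<lambda>y. h (Y(i := y))" d 0 x] by simp
  ultimately show ?thesis by (simp add: q_def)
qed

lemma distN_less_coordwise:
  assumes "\<forall>i<M. \<bar>q i - c i\<bar> < e / (real M + 1)" "e > 0"
  shows "distN M c q < e"
proof -
  have "distN M c q \<le> (\<Sum>i<M. \<bar>c i - q i\<bar>)"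
    using L2_set_le_sum_abs[of "\<lambda>i. c i - q i" "{..<M}"] by (simp add: distN_def L2_set_def)
  also have "\<dots> \<le> (\<Sum>i<M. e / (real M + 1))"
    using assms(1) by (intro sum_mono) (simp add: abs_minus_commute less_imp_le)
  also have "\<dots> < e" using assms(2) by (simp add: field_simps)
  finally show ?thesis .
qed

lemma smoothN_near:
  assumes "smoothN M U h" "c \<in> U" "\<epsilon> > 0"
  shows "\<exists>\<eta>>0. \<forall>y\<in>RN M. (\<forall>i<M. \<bar>y i - c i\<bar> < \<eta>) \<longrightarrow> y \<in> U \<and> \<bar>h y - h c\<bar> < \<epsilon>"
proof -
  obtain e0 where e0: "e0 > 0" "\<forall>y\<in>RN M. distN M c y < e0 \<longrightarrow> y \<in> U"
    using assms(1,2) unfolding smoothN_def openN_def by blast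
  obtain e1 where e1: "e1 > 0" "\<forall>y\<in>U. distN M c y < e1 \<longrightarrow> \<bar>h y - h c\<bar> < \<epsilon>"
    using smoothN_continuousN[OF assms(1)] assms(2,3) unfolding continuousN_def by blast
  have "y \<in> U \<and> \<bar>h y - h c\<bar> < \<epsilon>"
    if "y \<in> RN M" "\<forall>i<M. \<bar>y i - c i\<bar> < min e0 e1 / (real M + 1)" for y
    using distN_less_coordwise[OF that(2)] e0 e1 that(1) by auto
  then show ?thesis using e0(1) e1(1) by (intro exI[of _ "min e0 e1 / (real M + 1)"]) auto
qed

lemma distN_pair: "distN (Suc N) (pair_pt N q x) (pair_pt N q y) = \<bar>x - y\<bar>"
proof -
  have "(\<Sum>i<Suc N. (pair_pt N q x i - pair_pt N q y i)\<^sup>2) = (x - y)\<^sup>2"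
    by (simp add: pair_pt_def)
  thus ?thesis by (simp add: distN_def)
qed

lemma pair_pt_RN: "pair_pt N q x \<in> RN (Suc N)"
  by (simp add: RN_def pair_pt_def)

lemma pair_pt_cong: "(\<forall>i<N. q i = q' i) \<Longrightarrow> pair_pt N q x = pair_pt N q' x"
  by (auto simp: pair_pt_def)

lemma pair_pt_upd_N: "(pair_pt N q x)(N := y) = pair_pt N q y"
  by (auto simp: pair_pt_def)

lemma pair_pt_upd: "i < N \<Longrightarrow> (pair_pt N q x)(i := y) = pair_pt N (q(i := y)) x"
  by (auto simp: pair_pt_def)

lemma continuous_on_pair_pt_line:
  assumes "continuousN (Suc N) U h" "\<forall>\<sigma>\<in>S. pair_pt N q \<sigma> \<in> U"
  shows "continuous_on S (\<lambda>\<sigma>. h (pair_pt N q \<sigma>))"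
  unfolding continuous_on_iff
proof (intro ballI allI impI)
  fix x e assume x: "x \<in> S" and e: "(0::real) < e"
  obtain d where d: "d > 0" "\<forall>q'\<in>U. distN (Suc N) (pair_pt N q x) q' < d \<longrightarrow> \<bar>h q' - h (pair_pt N q x)\<bar> < e"
    using assms(1) assms(2) x e unfolding continuousN_def by blast
  show "\<exists>d>0. \<forall>x'\<in>S. dist x' x < d \<longrightarrow> dist (h (pair_pt N q x')) (h (pair_pt N q x)) < e"
  proof (intro exI[of _ d] conjI ballI impI)
    fix x' assume "x' \<in> S" "dist x' x < d"
    thus "dist (h (pair_pt N q x')) (h (pair_pt N q x)) < e"
      using d assms(2) distN_pair[of N q x x'] by (auto simp: dist_real_def abs_minus_commute)
  qed (fact d)
qed

section \<open>Expansions in powers of t with continuous coefficients\<close>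

definition cpowsum :: "((real \<Rightarrow> real) \<times> real) list \<Rightarrow> real \<Rightarrow> real \<Rightarrow> real" where
  "cpowsum L t \<sigma> = (\<Sum>p\<leftarrow>L. fst p \<sigma> * t powr snd p)"

lemma cpowsum_Nil[simp]: "cpowsum [] t \<sigma> = 0" by (simp add: cpowsum_def)
lemma cpowsum_Cons[simp]: "cpowsum (p # L) t \<sigma> = fst p \<sigma> * t powr snd p + cpowsum L t \<sigma>"
  by (simp add: cpowsum_def)
lemma cpowsum_append[simp]: "cpowsum (L1 @ L2) t \<sigma> = cpowsum L1 t \<sigma> + cpowsum L2 t \<sigma>"
  by (simp add: cpowsum_def)

definition unif_expansion ::
    "(real \<Rightarrow> real \<Rightarrow> real) \<Rightarrow> real set \<Rightarrow> ((real \<Rightarrow> real) \<times> real) list \<Rightarrow> bool" where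
  "unif_expansion D S L \<longleftrightarrow> (\<forall>p\<in>set L. continuous_on S (fst p) \<and> snd p \<ge> 0) \<and>
     unif_o_t (\<lambda>t \<sigma>. D t \<sigma> - cpowsum L t \<sigma>) S"

definition mult_cterms ::
    "(real \<times> real) list \<Rightarrow> ((real \<Rightarrow> real) \<times> real) list \<Rightarrow> ((real \<Rightarrow> real) \<times> real) list" where
  "mult_cterms P L = concat (map (\<lambda>p. map (\<lambda>q. (\<lambda>\<sigma>. fst p * fst q \<sigma>, snd p + snd q)) L) P)"

lemma cpowsum_mult_cterms: "t > 0 \<Longrightarrow> cpowsum (mult_cterms P L) t \<sigma> = powsum P t * cpowsum L t \<sigma>"
proof (induction P)
  case Nil thus ?case by (simp add: mult_cterms_def)
next
  case (Cons p P)
  have "cpowsum (map (\<lambda>q. (\<lambda>\<sigma>. fst p * fst q \<sigma>, snd p + snd q)) L) t \<sigma> = fst p * t powr snd p * cpowsum L t \<sigma>"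
    by (induction L) (auto simp: powr_add algebra_simps)
  thus ?case using Cons by (simp add: mult_cterms_def algebra_simps)
qed

lemma mult_cterms_props:
  assumes "nonneg_exps P" "\<forall>q\<in>set L. continuous_on S (fst q) \<and> snd q \<ge> 0"
  shows "\<forall>q\<in>set (mult_cterms P L). continuous_on S (fst q) \<and> snd q \<ge> 0"
  using assms unfolding mult_cterms_def nonneg_exps_def by (auto intro!: continuous_on_mult_left)

lemma cpowsum_bounded:
  assumes "\<forall>p\<in>set L. snd p \<ge> 0 \<and> (\<forall>\<sigma>\<in>S. \<bar>fst p \<sigma>\<bar> \<le> B)"
  shows "eventually (\<lambda>t. \<forall>\<sigma>\<in>S. \<bar>cpowsum L t \<sigma>\<bar> \<le> real (length L) * B) (at_right 0)"
proof -
  have "eventually (\<lambda>t. t \<le> 1) (at_right (0::real))" by (rule eventually_at_right_0_le) simp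
  thus ?thesis using eventually_at_right_0_pos
  proof eventually_elim
    case (elim t)
    show ?case
    proof
      fix \<sigma> assume s: "\<sigma> \<in> S"
      show "\<bar>cpowsum L t \<sigma>\<bar> \<le> real (length L) * B" using assms
      proof (induction L)
        case Nil thus ?case by simp
      next
        case (Cons p L)
        have "t powr snd p \<le> t powr 0" using elim Cons.prems by (intro powr_mono') auto
        hence tp: "t powr snd p \<le> 1" "t powr snd p \<ge> 0" using elim by simp_all
        have "\<bar>fst p \<sigma>\<bar> \<le> B" using Cons.prems s by auto
        hence "\<bar>fst p \<sigma> * t powr snd p\<bar> \<le> B" using tp
          by (simp add: abs_mult) (meson abs_ge_zero mult_left_le order_trans)
        moreover have "\<bar>cpowsum L t \<sigma>\<bar> \<le> real (length L) * B" using Cons by auto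
        ultimately show ?case using abs_triangle_ineq[of "fst p \<sigma> * t powr snd p" "cpowsum L t \<sigma>"]
          by (simp add: algebra_simps)
      qed
    qed
  qed
qed

lemma cont_bounded_compact:
  assumes "continuous_on S f" "compact K" "K \<subseteq> S"
  shows "\<exists>B. \<forall>\<sigma>\<in>K. \<bar>f \<sigma>\<bar> \<le> (B::real)"
proof -
  have "compact (f ` K)" using assms
    by (intro compact_continuous_image continuous_on_subset[OF assms(1)])
  hence "bounded (f ` K)" by (rule compact_imp_bounded)
  then obtain B where "\<forall>x\<in>f ` K. norm x \<le> B" unfolding bounded_iff by blast
  thus ?thesis by auto
qed

lemma coeffs_bounded_on_compact:
  assumes "\<forall>p\<in>set L. continuous_on S (fst p)" "compact K" "K \<subseteq> S"
  shows "\<exists>B. \<forall>p\<in>set L. \<forall>\<sigma>\<in>K. \<bar>fst p \<sigma>\<bar> \<le> (B::real)"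
  using assms(1)
proof (induction L)
  case Nil thus ?case by simp
next
  case (Cons p L)
  obtain B1 where B1: "\<forall>\<sigma>\<in>K. \<bar>fst p \<sigma>\<bar> \<le> B1"
    using cont_bounded_compact[OF _ assms(2,3), of "fst p"] Cons.prems by auto
  obtain B2 where B2: "\<forall>p\<in>set L. \<forall>\<sigma>\<in>K. \<bar>fst p \<sigma>\<bar> \<le> B2" using Cons by auto
  show ?case by (rule exI[of _ "max B1 B2"]) (use B1 B2 in force)
qed

lemma unif_expansion_subset: "unif_expansion D S L \<Longrightarrow> S' \<subseteq> S \<Longrightarrow> unif_expansion D S' L"
  unfolding unif_expansion_def by (auto intro: continuous_on_subset unif_o_t_subset)

definition neg_cterms :: "((real \<Rightarrow> real) \<times> real) list \<Rightarrow> ((real \<Rightarrow> real) \<times> real) list" where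
  "neg_cterms L = map (\<lambda>p. (\<lambda>\<sigma>. - fst p \<sigma>, snd p)) L"

lemma cpowsum_neg_cterms[simp]: "cpowsum (neg_cterms L) t \<sigma> = - cpowsum L t \<sigma>"
  by (induction L) (auto simp: neg_cterms_def)

lemma unif_expansion_diff:
  assumes "unif_expansion D1 S L1" "unif_expansion D2 S L2"
  shows "unif_expansion (\<lambda>t \<sigma>. D1 t \<sigma> - D2 t \<sigma>) S (L1 @ neg_cterms L2)"
proof -
  have "unif_o_t (\<lambda>t \<sigma>. (D1 t \<sigma> - cpowsum L1 t \<sigma>) - (D2 t \<sigma> - cpowsum L2 t \<sigma>)) S"
    using assms unfolding unif_expansion_def
      by (intro unif_o_t_diff[of "\<lambda>t \<sigma>. D1 t \<sigma> - cpowsum L1 t \<sigma>" S "\<lambda>t \<sigma>. D2 t \<sigma> - cpowsum L2 t \<sigma>"]) auto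
  hence "unif_o_t (\<lambda>t \<sigma>. D1 t \<sigma> - D2 t \<sigma> - cpowsum (L1 @ neg_cterms L2) t \<sigma>) S"
    by (simp add: algebra_simps)
  moreover have "\<forall>p\<in>set (L1 @ neg_cterms L2). continuous_on S (fst p) \<and> snd p \<ge> 0"
  proof
    fix p assume p: "p \<in> set (L1 @ neg_cterms L2)"
    show "continuous_on S (fst p) \<and> snd p \<ge> 0"
    proof (cases "p \<in> set L1")
      case True thus ?thesis using assms(1) unfolding unif_expansion_def by blast
    next
      case False
      then obtain q where q: "q \<in> set L2" "p = (\<lambda>\<sigma>. - fst q \<sigma>, snd q)" using p
        by (auto simp: neg_cterms_def)
      have "continuous_on S (fst q)" "snd q \<ge> 0" using q(1) assms(2) unfolding unif_expansion_def
        by auto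
      thus ?thesis using q(2) continuous_on_minus by fastforce
    qed
  qed
  ultimately show ?thesis unfolding unif_expansion_def by blast
qed

definition powsum_coeff :: "(real \<times> real) list \<Rightarrow> real \<Rightarrow> real" where
  "powsum_coeff L e = (\<Sum>p\<leftarrow>filter (\<lambda>p. snd p = e) L. fst p)"

definition cpowsum_coeff :: "((real \<Rightarrow> real) \<times> real) list \<Rightarrow> real \<Rightarrow> real \<Rightarrow> real" where
  "cpowsum_coeff L e \<sigma> = (\<Sum>p\<leftarrow>filter (\<lambda>p. snd p = e) L. fst p \<sigma>)"

definition eval_cterms :: "((real \<Rightarrow> real) \<times> real) list \<Rightarrow> real \<Rightarrow> (real \<times> real) list" where
  "eval_cterms L \<sigma> = map (\<lambda>p. (fst p \<sigma>, snd p)) L"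

lemma cpowsum_eval_cterms: "cpowsum L t \<sigma> = powsum (eval_cterms L \<sigma>) t"
  by (induction L) (auto simp: eval_cterms_def)

lemma powsum_coeff_eval_cterms: "powsum_coeff (eval_cterms L \<sigma>) e = cpowsum_coeff L e \<sigma>"
  by (induction L) (auto simp: eval_cterms_def powsum_coeff_def cpowsum_coeff_def)

lemma powsum_coeff_Cons: "powsum_coeff (p # L) e = (if snd p = e then fst p else 0) + powsum_coeff L e"
  by (simp add: powsum_coeff_def)

lemma powsum_coeff_notin: "e \<notin> set (map snd L) \<Longrightarrow> powsum_coeff L e = 0"
  by (induction L) (auto simp: powsum_coeff_def)

lemma powsum_regroup:
  "finite F \<Longrightarrow> set (map snd L) \<subseteq> F \<Longrightarrow> powsum L t = (\<Sum>e\<in>F. powsum_coeff L e * t powr e)"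
proof (induction L)
  case Nil thus ?case by (simp add: powsum_coeff_def)
next
  case (Cons p L)
  have "(\<Sum>e\<in>F. powsum_coeff (p # L) e * t powr e) =
      (\<Sum>e\<in>F. (if snd p = e then fst p * t powr e else 0) + powsum_coeff L e * t powr e)"
    by (intro sum.cong) (auto simp: powsum_coeff_Cons algebra_simps)
  also have "\<dots> = fst p * t powr snd p + (\<Sum>e\<in>F. powsum_coeff L e * t powr e)"
    using Cons.prems by (simp add: sum.distrib sum.delta)
  finally show ?case using Cons by simp
qed

lemma cpowsum_regroup: "cpowsum L t \<sigma> = (\<Sum>e\<in>set (map snd L). cpowsum_coeff L e \<sigma> * t powr e)"
proof -
  have "set (map snd (eval_cterms L \<sigma>)) = set (map snd L)" by (auto simp: eval_cterms_def)
  then show ?thesis using powsum_regroup[of "set (map snd L)" "eval_cterms L \<sigma>" t]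
    by (simp add: cpowsum_eval_cterms powsum_coeff_eval_cterms)
qed

lemma tendsto_powr_sum_lowest:
  fixes c :: "real \<Rightarrow> real" and S :: "real set"
  assumes "finite S" "m \<in> S" "\<And>e. e \<in> S \<Longrightarrow> m \<le> e"
  shows "((\<lambda>t. (\<Sum>e\<in>S. c e * t powr e) / t powr m) \<longlongrightarrow> c m) (at_right 0)"
proof -
  have "((\<lambda>t. c m + (\<Sum>e\<in>S - {m}. c e * t powr (e - m))) \<longlongrightarrow> c m + 0) (at_right 0)"
  proof (intro tendsto_add tendsto_const tendsto_null_sum)
    fix e assume "e \<in> S - {m}"
    then have "m \<le> e" "e \<noteq> m" using assms(3) by auto
    then have "e - m > 0" by linarith
    from tendsto_mult_right_zero[OF tendsto_powr_at_right_0[OF this]]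
    show "((\<lambda>t. c e * t powr (e - m)) \<longlongrightarrow> 0) (at_right 0)" .
  qed
  moreover have "eventually (\<lambda>t. c m + (\<Sum>e\<in>S - {m}. c e * t powr (e - m)) =
      (\<Sum>e\<in>S. c e * t powr e) / t powr m) (at_right 0)"
    using eventually_at_right_0_pos
  proof eventually_elim
    case (elim t)
    have "(\<Sum>e\<in>S. c e * t powr e) / t powr m = (\<Sum>e\<in>S. c e * t powr (e - m))"
      unfolding sum_divide_distrib using elim by (intro sum.cong) (auto simp: powr_diff)
    also have "\<dots> = c m + (\<Sum>e\<in>S - {m}. c e * t powr (e - m))"
      using assms(1,2) elim by (subst sum.remove) auto
    finally show ?case ..
  qed
  ultimately show ?thesis using tendsto_cong by force
qed

lemma little_o_t_div_powr:
  assumes "little_o_t f" "m \<le> 1"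
  shows "((\<lambda>t. f t / t powr m) \<longlongrightarrow> 0) (at_right 0)"
proof (rule Lim_null_comparison)
  show "((\<lambda>t. \<bar>f t / t\<bar>) \<longlongrightarrow> 0) (at_right 0)"
    using tendsto_rabs_zero[OF assms(1)[unfolded little_o_t_def]] .
  show "eventually (\<lambda>t. norm (f t / t powr m) \<le> \<bar>f t / t\<bar>) (at_right 0)"
    using eventually_at_right_0_le[OF zero_less_one] eventually_at_right_0_pos
  proof eventually_elim
    case (elim t)
    then have "t \<le> t powr m" using powr_mono'[of m 1 t] assms(2) by simp
    then have "\<bar>f t\<bar> / t powr m \<le> \<bar>f t\<bar> / t" using elim by (intro divide_left_mono) auto
    then show ?case using elim by (simp add: abs_divide)
  qed
qed

lemma little_o_t_powsum_coeff_zero: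
  assumes "little_o_t (powsum L)" "e \<le> 1"
  shows "powsum_coeff L e = 0"
proof (rule ccontr)
  assume "powsum_coeff L e \<noteq> 0"
  define S where "S = {e \<in> set (map snd L). powsum_coeff L e \<noteq> 0}"
  have S: "finite S" "e \<in> S" using \<open>powsum_coeff L e \<noteq> 0\<close> powsum_coeff_notin[of e L]
    by (auto simp: S_def)
  define m where "m = Min S"
  have m: "m \<in> S" "\<And>e'. e' \<in> S \<Longrightarrow> m \<le> e'"
    using Min_in[OF S(1)] Min_le[OF S(1)] S(2) by (auto simp: m_def)
  have "powsum L t = (\<Sum>e\<in>S. powsum_coeff L e * t powr e)" for t
    using powsum_regroup[of "set (map snd L)" L t]
      by (auto simp: S_def intro: sum.mono_neutral_right)
  then have "((\<lambda>t. powsum L t / t powr m) \<longlongrightarrow> powsum_coeff L m) (at_right 0)"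
    using tendsto_powr_sum_lowest[OF S(1) m(1) m(2)] by simp
  moreover have "((\<lambda>t. powsum L t / t powr m) \<longlongrightarrow> 0) (at_right 0)"
    using little_o_t_div_powr[OF assms(1)] m(2)[OF S(2)] assms(2) by simp
  ultimately have "powsum_coeff L m = 0" by (rule tendsto_at_right_0_unique)
  then show False using m(1) by (simp add: S_def)
qed

lemma cpowsum_coeff_bound:
  assumes "\<forall>p\<in>set L. \<bar>fst p \<sigma>\<bar> \<le> B"
  shows "\<bar>cpowsum_coeff L e \<sigma>\<bar> \<le> real (length L) * B"
  using assms
proof (induction L)
  case Nil thus ?case by (simp add: cpowsum_coeff_def)
next
  case (Cons p L)
  have "\<bar>cpowsum_coeff (p # L) e \<sigma>\<bar> \<le> \<bar>if snd p = e then fst p \<sigma> else 0\<bar> + \<bar>cpowsum_coeff L e \<sigma>\<bar>"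
    by (simp add: cpowsum_coeff_def abs_triangle_ineq)
  also have "\<dots> \<le> B + real (length L) * B" using Cons by (intro add_mono) auto
  finally show ?case by (simp add: algebra_simps)
qed

lemma continuous_on_cpowsum_coeff:
  "\<forall>p\<in>set L. continuous_on S (fst p) \<Longrightarrow> continuous_on S (cpowsum_coeff L e)"
proof (induction L)
  case Nil thus ?case by (simp add: cpowsum_coeff_def[abs_def])
next
  case (Cons p L)
  have "cpowsum_coeff (p # L) e = (\<lambda>\<sigma>. (if snd p = e then fst p \<sigma> else 0) + cpowsum_coeff L e \<sigma>)"
    by (rule ext) (simp add: cpowsum_coeff_def)
  then show ?case using Cons by (cases "snd p = e") (auto intro!: continuous_on_add)
qed

lemma unif_expansion_cpowsum_coeff_zero:
  assumes "unif_expansion D S L" "\<sigma> \<in> S" "little_o_t (\<lambda>t. D t \<sigma>)" "e \<le> 1"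
  shows "cpowsum_coeff L e \<sigma> = 0"
proof -
  have "little_o_t (\<lambda>t. D t \<sigma> - cpowsum L t \<sigma>)"
    using unif_o_t_imp_little_o_t[of "\<lambda>t \<sigma>. D t \<sigma> - cpowsum L t \<sigma>" S \<sigma>] assms(1,2)
    unfolding unif_expansion_def by blast
  from little_o_t_diff[OF assms(3) this] have "little_o_t (powsum (eval_cterms L \<sigma>))"
    by (simp add: cpowsum_eval_cterms)
  from little_o_t_powsum_coeff_zero[OF this assms(4)] show ?thesis
    by (simp add: powsum_coeff_eval_cterms)
qed

lemma unif_o_t_of_cpowsum_coeff_zero:
  assumes exp: "unif_expansion D S L" and K: "compact K" "K \<subseteq> S"
    and zero: "\<forall>\<sigma>\<in>K. \<forall>e\<le>1. cpowsum_coeff L e \<sigma> = 0"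
  shows "unif_o_t D K"
proof -
  obtain B where B: "\<forall>p\<in>set L. \<forall>\<sigma>\<in>K. \<bar>fst p \<sigma>\<bar> \<le> B"
    using coeffs_bounded_on_compact[OF _ K] exp unfolding unif_expansion_def by blast
  have "unif_o_t (\<lambda>t \<sigma>. cpowsum_coeff L e \<sigma> * t powr e) K" for e
  proof (cases "e \<le> 1")
    case True
    then show ?thesis using zero by (intro unif_o_t_dominated[OF unif_o_t_zero]) auto
  next
    case False
    have "eventually (\<lambda>t. \<forall>\<sigma>\<in>K. \<bar>cpowsum_coeff L e \<sigma> * t powr e\<bar> \<le> real (length L) * B * t powr e) (at_right 0)"
      using eventually_at_right_0_pos
      by eventually_elim (use B cpowsum_coeff_bound in \<open>auto simp: abs_mult intro!: mult_right_mono\<close>)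
    then show ?thesis using False by (intro unif_o_t_powr_bound) auto
  qed
  then have "unif_o_t (\<lambda>t \<sigma>. cpowsum L t \<sigma>) K"
    by (subst cpowsum_regroup, intro unif_o_t_sum) auto
  moreover have "unif_o_t (\<lambda>t \<sigma>. D t \<sigma> - cpowsum L t \<sigma>) K"
    using exp K(2) unfolding unif_expansion_def by (blast intro: unif_o_t_subset)
  ultimately show ?thesis using unif_o_t_add by fastforce
qed

lemma has_integral_cpowsum:
  assumes "\<forall>p\<in>set L. continuous_on {a..b} (fst p)"
  shows "(cpowsum L t has_integral powsum (map (\<lambda>p. (integral {a..b} (fst p), snd p)) L) t) {a..b}"
  using assms
proof (induction L)
  case Nil
  have "cpowsum [] t = (\<lambda>\<sigma>. 0)" by (rule ext) simp
  then show ?case by simp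
next
  case (Cons p L)
  have "(fst p has_integral integral {a..b} (fst p)) {a..b}"
    using integrable_continuous_real[of a b "fst p"] Cons.prems
      by (simp add: has_integral_integrable_integral)
  then have "((\<lambda>\<sigma>. fst p \<sigma> * t powr snd p + cpowsum L t \<sigma>) has_integral
      integral {a..b} (fst p) * t powr snd p + powsum (map (\<lambda>p. (integral {a..b} (fst p), snd p)) L) t) {a..b}"
    using Cons by (intro has_integral_add has_integral_mult_left) auto
  moreover have "cpowsum (p # L) t = (\<lambda>\<sigma>. fst p \<sigma> * t powr snd p + cpowsum L t \<sigma>)"
    by (rule ext) simp
  ultimately show ?case by simp
qed

lemma has_integral_cpowsum_coeff:
  assumes "\<forall>p\<in>set L. continuous_on {a..b} (fst p)"
  shows "(cpowsum_coeff L e has_integral powsum_coeff (map (\<lambda>p. (integral {a..b} (fst p), snd p)) L) e) {a..b}"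
  using assms
proof (induction L)
  case Nil
  have "cpowsum_coeff [] e = (\<lambda>\<sigma>. 0)" by (rule ext) (simp add: cpowsum_coeff_def)
  then show ?case by (simp add: powsum_coeff_def)
next
  case (Cons p L)
  have "(fst p has_integral integral {a..b} (fst p)) {a..b}"
    using integrable_continuous_real[of a b "fst p"] Cons.prems
      by (simp add: has_integral_integrable_integral)
  then have "((\<lambda>\<sigma>. if snd p = e then fst p \<sigma> else 0) has_integral
      (if snd p = e then integral {a..b} (fst p) else 0)) {a..b}" by auto
  moreover have "cpowsum_coeff (p # L) e = (\<lambda>\<sigma>. (if snd p = e then fst p \<sigma> else 0) + cpowsum_coeff L e \<sigma>)"
    by (rule ext) (simp add: cpowsum_coeff_def)
  ultimately show ?case using Cons by (auto simp: powsum_coeff_Cons intro: has_integral_add)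
qed

lemma little_o_t_integral:
  assumes "a \<le> b" and o: "unif_o_t R {a..b}"
    and I: "eventually (\<lambda>t. (R t has_integral I t) {a..b}) (at_right 0)"
  shows "little_o_t I"
  unfolding little_o_t_iff
proof (intro allI impI)
  fix \<epsilon> :: real assume "\<epsilon> > 0"
  then have "\<epsilon> / (b - a + 1) > 0" using \<open>a \<le> b\<close> by simp
  from unif_o_tD[OF o this] I eventually_at_right_0_pos
  show "eventually (\<lambda>t. \<bar>I t\<bar> \<le> \<epsilon> * t) (at_right 0)"
  proof eventually_elim
    case (elim t)
    have "norm (I t) \<le> \<epsilon> / (b - a + 1) * t * Henstock_Kurzweil_Integration.content (cbox a b)"
      by (rule has_integral_bound[of _ "R t"]) (use elim \<open>\<epsilon> > 0\<close> \<open>a \<le> b\<close> in auto)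
    also have "\<dots> = \<epsilon> * t * ((b - a) / (b - a + 1))" using \<open>a \<le> b\<close> by (simp add: content_real)
    also have "\<dots> \<le> \<epsilon> * t * 1" using \<open>\<epsilon> > 0\<close> elim(3) \<open>a \<le> b\<close> by (intro mult_left_mono) auto
    finally show ?case by simp
  qed
qed

lemma integral_cpowsum_coeff_zero:
  assumes exp: "unif_expansion D' (ball \<sigma>0 \<delta>) L"
    and der: "eventually (\<lambda>t. \<forall>\<sigma>\<in>ball \<sigma>0 \<delta>. (D t has_real_derivative D' t \<sigma>) (at \<sigma>)) (at_right 0)"
    and o: "\<forall>\<sigma>\<in>ball \<sigma>0 \<delta>. little_o_t (\<lambda>t. D t \<sigma>)"
    and \<sigma>: "\<sigma>1 \<in> ball \<sigma>0 \<delta>" "\<sigma>2 \<in> ball \<sigma>0 \<delta>" "\<sigma>1 \<le> \<sigma>2" and "e \<le> 1"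
  shows "integral {\<sigma>1..\<sigma>2} (cpowsum_coeff L e) = 0"
proof -
  have sub: "{\<sigma>1..\<sigma>2} \<subseteq> ball \<sigma>0 \<delta>" using \<sigma> by (auto simp: ball_eq_greaterThanLessThan)
  have cont: "\<forall>p\<in>set L. continuous_on {\<sigma>1..\<sigma>2} (fst p)"
    using exp sub continuous_on_subset unfolding unif_expansion_def by blast
  define IL where "IL = map (\<lambda>p. (integral {\<sigma>1..\<sigma>2} (fst p), snd p)) L"
  have approx: "little_o_t (\<lambda>t. (D t \<sigma>2 - D t \<sigma>1) - powsum IL t)"
  proof (rule little_o_t_integral[OF \<sigma>(3)])
    show "unif_o_t (\<lambda>t \<sigma>. D' t \<sigma> - cpowsum L t \<sigma>) {\<sigma>1..\<sigma>2}"
      using exp sub unfolding unif_expansion_def by (blast intro: unif_o_t_subset)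
    from der show "eventually (\<lambda>t. ((\<lambda>\<sigma>. D' t \<sigma> - cpowsum L t \<sigma>) has_integral
        (D t \<sigma>2 - D t \<sigma>1) - powsum IL t) {\<sigma>1..\<sigma>2}) (at_right 0)"
    proof eventually_elim
      case (elim t)
      have "(D' t has_integral D t \<sigma>2 - D t \<sigma>1) {\<sigma>1..\<sigma>2}"
      proof (rule fundamental_theorem_of_calculus[OF \<sigma>(3)])
        fix x assume "x \<in> {\<sigma>1..\<sigma>2}"
        with elim sub have "(D t has_real_derivative D' t x) (at x)" by blast
        then show "(D t has_vector_derivative D' t x) (at x within {\<sigma>1..\<sigma>2})"
          by (simp add: has_real_derivative_iff_has_vector_derivative has_vector_derivative_at_within)
      qed
      then show ?case unfolding IL_def by (intro has_integral_diff has_integral_cpowsum cont)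
    qed
  qed
  have "little_o_t (\<lambda>t. D t \<sigma>2 - D t \<sigma>1)"
    using o \<sigma>(1,2) by (intro little_o_t_diff) auto
  from little_o_t_diff[OF this approx] have "little_o_t (powsum IL)" by simp
  then have "powsum_coeff IL e = 0" using \<open>e \<le> 1\<close> by (rule little_o_t_powsum_coeff_zero)
  moreover have "(cpowsum_coeff L e has_integral powsum_coeff IL e) {\<sigma>1..\<sigma>2}"
    unfolding IL_def by (rule has_integral_cpowsum_coeff[OF cont])
  ultimately show ?thesis by (simp add: integral_unique)
qed

lemma continuous_zero_if_integrals_zero:
  fixes g :: "real \<Rightarrow> real"
  assumes "continuous_on (ball \<sigma>0 \<delta>) g" "\<sigma> \<in> ball \<sigma>0 \<delta>"
    and zero: "\<And>\<sigma>1 \<sigma>2. \<sigma>1 \<in> ball \<sigma>0 \<delta> \<Longrightarrow> \<sigma>2 \<in> ball \<sigma>0 \<delta> \<Longrightarrow> \<sigma>1 \<le> \<sigma>2 \<Longrightarrow> integral {\<sigma>1..\<sigma>2} g = 0"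
  shows "g \<sigma> = 0"
proof -
  obtain d where d: "d > 0" "cball \<sigma> d \<subseteq> ball \<sigma>0 \<delta>"
    using assms(2) open_ball open_contains_cball by blast
  define a b where "a = \<sigma> - d" and "b = \<sigma> + d"
  have ab: "{a..b} \<subseteq> ball \<sigma>0 \<delta>" using d(2) by (simp add: a_def b_def cball_eq_atLeastAtMost)
  have "\<sigma> \<in> {a<..<b}" using d(1) by (simp add: a_def b_def)
  have "((\<lambda>x. integral {a..x} g) has_real_derivative g \<sigma>) (at \<sigma> within {a..b})"
    by (rule integral_has_real_derivative[OF continuous_on_subset[OF assms(1) ab]])
      (use \<open>\<sigma> \<in> {a<..<b}\<close> in auto)
  then have "((\<lambda>x. integral {a..x} g) has_real_derivative g \<sigma>) (at \<sigma>)"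
    using at_within_interior[of \<sigma> "{a..b}"] \<open>\<sigma> \<in> {a<..<b}\<close> by simp
  then have "((\<lambda>x. 0) has_real_derivative g \<sigma>) (at \<sigma>)"
  proof (rule has_field_derivative_transform_within_open[OF _ open_greaterThanLessThan \<open>\<sigma> \<in> {a<..<b}\<close>])
    fix x assume "x \<in> {a<..<b}"
    then have "a \<in> {a..b}" "x \<in> {a..b}" "a \<le> x" by auto
    then have "a \<in> ball \<sigma>0 \<delta>" "x \<in> ball \<sigma>0 \<delta>" "a \<le> x" using ab by blast+
    then show "integral {a..x} g = 0" by (rule zero)
  qed
  then show ?thesis by (rule DERIV_unique[OF _ DERIV_const])
qed

lemma unif_expansion_cpowsum_coeff_vanish:
  assumes exp: "unif_expansion D' (ball \<sigma>0 \<delta>) L"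
    and der: "eventually (\<lambda>t. \<forall>\<sigma>\<in>ball \<sigma>0 \<delta>. (D t has_real_derivative D' t \<sigma>) (at \<sigma>)) (at_right 0)"
    and o: "\<forall>\<sigma>\<in>ball \<sigma>0 \<delta>. little_o_t (\<lambda>t. D t \<sigma>)"
  shows "\<forall>\<sigma>\<in>ball \<sigma>0 \<delta>. \<forall>e\<le>1. cpowsum_coeff L e \<sigma> = 0"
proof (intro ballI allI impI)
  fix \<sigma> e :: real assume "\<sigma> \<in> ball \<sigma>0 \<delta>" "e \<le> 1"
  show "cpowsum_coeff L e \<sigma> = 0"
  proof (rule continuous_zero_if_integrals_zero[OF _ \<open>\<sigma> \<in> ball \<sigma>0 \<delta>\<close>])
    show "continuous_on (ball \<sigma>0 \<delta>) (cpowsum_coeff L e)"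
      using exp by (intro continuous_on_cpowsum_coeff) (simp add: unif_expansion_def)
  qed (rule integral_cpowsum_coeff_zero[OF exp der o _ _ _ \<open>e \<le> 1\<close>])
qed

lemma unif_o_t_of_dense_little_o_t:
  assumes exp: "unif_expansion D (ball s0 \<delta>) L" and K: "compact K" "K \<subseteq> ball s0 \<delta>"
    and T: "T \<subseteq> ball s0 \<delta>" "\<forall>\<tau>\<in>T. little_o_t (\<lambda>t. D t \<tau>)"
    and dense: "\<forall>\<sigma>\<in>K. \<forall>\<epsilon>>0. \<exists>\<tau>\<in>T. \<bar>\<tau> - \<sigma>\<bar> < \<epsilon>"
  shows "unif_o_t D K"
proof (rule unif_o_t_of_cpowsum_coeff_zero[OF exp K])
  show "\<forall>\<sigma>\<in>K. \<forall>e\<le>1. cpowsum_coeff L e \<sigma> = 0"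
  proof (intro ballI allI impI, rule ccontr)
    fix \<sigma> e :: real assume "\<sigma> \<in> K" "e \<le> 1" "cpowsum_coeff L e \<sigma> \<noteq> 0"
    moreover have "continuous_on (ball s0 \<delta>) (cpowsum_coeff L e)"
      using exp by (intro continuous_on_cpowsum_coeff) (simp add: unif_expansion_def)
    then have "continuous (at \<sigma>) (cpowsum_coeff L e)"
      using K(2) \<open>\<sigma> \<in> K\<close> by (auto simp: continuous_on_eq_continuous_at)
    ultimately obtain d where "d > 0" "\<forall>y. dist \<sigma> y < d \<longrightarrow> cpowsum_coeff L e y \<noteq> 0"
      using continuous_at_avoid by blast
    moreover obtain \<tau> where "\<tau> \<in> T" "\<bar>\<tau> - \<sigma>\<bar> < d" using dense \<open>\<sigma> \<in> K\<close> \<open>d > 0\<close> by blast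
    moreover have "cpowsum_coeff L e \<tau> = 0"
      using unif_expansion_cpowsum_coeff_zero[OF exp _ _ \<open>e \<le> 1\<close>] T \<open>\<tau> \<in> T\<close> by blast
    ultimately show False by (auto simp: dist_real_def abs_minus_commute)
  qed
qed

lemma unif_expansion_derivative_little_o_t:
  assumes "\<delta> > 0" and exp: "unif_expansion D' (ball \<sigma>0 \<delta>) L"
    and der: "eventually (\<lambda>t. \<forall>\<sigma>\<in>ball \<sigma>0 \<delta>. (D t has_real_derivative D' t \<sigma>) (at \<sigma>)) (at_right 0)"
    and o: "\<forall>\<sigma>\<in>ball \<sigma>0 \<delta>. little_o_t (\<lambda>t. D t \<sigma>)"
  shows "little_o_t (\<lambda>t. D' t \<sigma>0)"
proof -
  have "unif_o_t D' {\<sigma>0}"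
    using unif_expansion_cpowsum_coeff_vanish[OF exp der o] \<open>\<delta> > 0\<close>
      by (intro unif_o_t_of_cpowsum_coeff_zero[OF exp]) auto
  then show ?thesis by (rule unif_o_t_imp_little_o_t) simp
qed

section \<open>Taylor expansion in the parameters\<close>

lemma taylor_remainder_bound:
  fixes diff :: "nat \<Rightarrow> real \<Rightarrow> real"
  assumes n: "n > 0"
    and D: "\<And>m y. m < n \<Longrightarrow> \<bar>y - c\<bar> \<le> \<bar>x - c\<bar> \<Longrightarrow> (diff m has_real_derivative diff (Suc m) y) (at y)"
    and B: "\<And>y. \<bar>y - c\<bar> \<le> \<bar>x - c\<bar> \<Longrightarrow> \<bar>diff n y\<bar> \<le> B"
  shows "\<bar>diff 0 x - (\<Sum>m<n. diff m c / fact m * (x - c) ^ m)\<bar> \<le> B / fact n * \<bar>x - c\<bar> ^ n"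
proof (cases "x = c")
  case True
  have "(\<Sum>m<n. diff m c / fact m * (x - c) ^ m) = (\<Sum>m<n. if m = 0 then diff 0 c else 0)"
    using True by (intro sum.cong) auto
  then show ?thesis using True n by (simp add: zero_power)
next
  case False
  have "\<exists>\<xi>. (if x < c then x < \<xi> \<and> \<xi> < c else c < \<xi> \<and> \<xi> < x) \<and>
    diff 0 x = (\<Sum>m<n. diff m c / fact m * (x - c) ^ m) + diff n \<xi> / fact n * (x - c) ^ n"
  proof (rule Taylor[of n diff "diff 0" "min c x" "max c x" c x])
    show "\<forall>m y. m < n \<and> min c x \<le> y \<and> y \<le> max c x \<longrightarrow> DERIV (diff m) y :> diff (Suc m) y"
      by (auto intro!: D)
  qed (use n False in auto)
  then obtain \<xi> where \<xi>: "if x < c then x < \<xi> \<and> \<xi> < c else c < \<xi> \<and> \<xi> < x"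
    "diff 0 x - (\<Sum>m<n. diff m c / fact m * (x - c) ^ m) = diff n \<xi> / fact n * (x - c) ^ n"
    by auto
  have "\<bar>\<xi> - c\<bar> \<le> \<bar>x - c\<bar>" using \<xi>(1) by (auto split: if_splits)
  have "\<bar>diff n \<xi> / fact n * (x - c) ^ n\<bar> = \<bar>diff n \<xi>\<bar> / fact n * \<bar>x - c\<bar> ^ n"
    by (simp add: abs_mult power_abs)
  also have "\<dots> \<le> B / fact n * \<bar>x - c\<bar> ^ n"
    using B[OF \<open>\<bar>\<xi> - c\<bar> \<le> \<bar>x - c\<bar>\<close>] by (intro mult_right_mono divide_right_mono) auto
  finally show ?thesis using \<xi>(2) by simp
qed

lemma taylor_along_coordinate:
  assumes h: "smoothN M U h" "q < M" "n > 0"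
    and near: "\<And>y. \<bar>y - c\<bar> \<le> \<bar>x - c\<bar> \<Longrightarrow> Y(q := y) \<in> U \<and> \<bar>(partial q ^^ n) h (Y(q := y))\<bar> \<le> B"
  shows "\<bar>h (Y(q := x)) - (\<Sum>m<n. (partial q ^^ m) h (Y(q := c)) / fact m * (x - c) ^ m)\<bar>
    \<le> B / fact n * \<bar>x - c\<bar> ^ n"
proof -
  have "\<bar>(partial q ^^ 0) h (Y(q := x)) - (\<Sum>m<n. (partial q ^^ m) h (Y(q := c)) / fact m * (x - c) ^ m)\<bar>
      \<le> B / fact n * \<bar>x - c\<bar> ^ n"
  proof (rule taylor_remainder_bound[OF h(3), where diff = "\<lambda>m y. (partial q ^^ m) h (Y(q := y))"])
    fix m y assume "m < n" "\<bar>y - c\<bar> \<le> \<bar>x - c\<bar>"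
    then have "Y(q := y) \<in> U" using near by blast
    from has_real_derivative_partial[OF smoothN_partial_iter[OF h(1,2)] h(2) this]
    show "((\<lambda>y. (partial q ^^ m) h (Y(q := y))) has_real_derivative
        (partial q ^^ Suc m) h (Y(q := y))) (at y)" by simp
  qed (use near in blast)
  then show ?thesis by simp
qed

lemma ex_exponent_gt_1: "a > 0 \<Longrightarrow> \<exists>n>0. a * real n > 1"
proof -
  assume "a > 0"
  then obtain n where "1 < real n * a" using ex_less_of_nat_mult by blast
  then show ?thesis by (intro exI[of _ n]) (auto simp: mult.commute intro: gr0I)
qed

lemma powr_pow_le:
  assumes "\<bar>u\<bar> \<le> K * t powr a" "t > 0"
  shows "\<bar>u\<bar> ^ n \<le> K ^ n * t powr (a * real n)"
proof -
  have "\<bar>u\<bar> ^ n \<le> (K * t powr a) ^ n" using assms(1) by (intro power_mono) auto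
  also have "\<dots> = K ^ n * t powr (a * real n)"
    using assms(2) by (simp add: power_mult_distrib powr_realpow[symmetric] powr_powr)
  finally show ?thesis .
qed

lemma common_radius:
  fixes n :: nat
  assumes "\<forall>m<n. \<exists>\<delta>>0. P m \<delta>" and "\<And>m \<delta> \<delta>'. P m \<delta> \<Longrightarrow> 0 < \<delta>' \<Longrightarrow> \<delta>' \<le> \<delta> \<Longrightarrow> P m \<delta>'"
  shows "\<exists>\<delta>>0. \<forall>m<n. P m (\<delta>::real)"
  using assms(1)
proof (induction n)
  case 0 show ?case by (intro exI[of _ 1]) simp
next
  case (Suc n)
  obtain \<delta>1 where "\<delta>1 > 0" "\<forall>m<n. P m \<delta>1" using Suc by auto
  moreover obtain \<delta>2 where "\<delta>2 > 0" "P n \<delta>2" using Suc.prems by auto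
  ultimately show ?case
    by (intro exI[of _ "min \<delta>1 \<delta>2"]) (auto simp: less_Suc_eq intro: assms(2))
qed

definition subst_coords :: "(nat \<Rightarrow> real \<Rightarrow> real) \<Rightarrow> (nat \<Rightarrow> real) \<Rightarrow> nat set \<Rightarrow> real \<Rightarrow> nat \<Rightarrow> real" where
  "subst_coords pr r Q t = (\<lambda>i. if i \<in> Q then pr i t else r i)"

lemma subst_coords_empty[simp]: "subst_coords pr r {} t = r" by (simp add: subst_coords_def)

lemma subst_coords_insert: "subst_coords pr r (insert q Q) t = (subst_coords pr r Q t)(q := pr q t)"
  by (rule ext) (simp add: subst_coords_def)

lemma cpowsum_concat: "cpowsum (concat (map F xs)) t \<sigma> = (\<Sum>x\<leftarrow>xs. cpowsum (F x) t \<sigma>)"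
  by (induction xs) auto

lemma eventually_all_less:
  assumes "\<forall>i<(N::nat). eventually (P i) F"
  shows "eventually (\<lambda>t. \<forall>i<N. P i t) F"
proof -
  have "eventually (\<lambda>t. \<forall>i\<in>{..<N}. P i t) F"
    by (rule eventually_ball_finite) (use assms in auto)
  thus ?thesis by (rule eventually_mono) auto
qed

lemma unif_expansion_taylor_sum:
  assumes exp: "\<And>m. m < n \<Longrightarrow> unif_expansion (A m) T (L m)"
    and K: "compact K" "S \<subseteq> K" "K \<subseteq> T"
    and u: "powsum_approx u" "eventually (\<lambda>t. \<bar>u t\<bar> \<le> 1) (at_right 0)"
    and rem: "c > 1"
      "eventually (\<lambda>t. \<forall>\<sigma>\<in>S. \<bar>F t \<sigma> - (\<Sum>m<n. A m t \<sigma> / fact m * u t ^ m)\<bar> \<le> C * t powr c) (at_right 0)"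
  shows "\<exists>L. unif_expansion F S L"
proof -
  have "\<exists>P. nonneg_exps P \<and> little_o_t (\<lambda>t. u t ^ m / fact m - powsum P t)" for m
    using powsum_approx_mult[OF powsum_approx_power[OF u(1), of m] powsum_approx_const[of "1 / fact m"]]
    by (simp add: powsum_approx_def)
  then obtain P where P: "\<And>m. nonneg_exps (P m)" "\<And>m. little_o_t (\<lambda>t. u t ^ m / fact m - powsum (P m) t)"
    by metis
  have "\<exists>B. m < n \<longrightarrow> (\<forall>p\<in>set (L m). \<forall>\<sigma>\<in>K. \<bar>fst p \<sigma>\<bar> \<le> B)" for m
    using coeffs_bounded_on_compact[OF _ K(1,3), of "L m"] exp[of m]
      by (auto simp: unif_expansion_def)
  then obtain B where B: "\<And>m. m < n \<Longrightarrow> \<forall>p\<in>set (L m). \<forall>\<sigma>\<in>K. \<bar>fst p \<sigma>\<bar> \<le> B m"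
    by metis
  define L' where "L' = concat (map (\<lambda>m. mult_cterms (P m) (L m)) [0..<n])"
  have cpowsum_L': "cpowsum L' t \<sigma> = (\<Sum>m<n. powsum (P m) t * cpowsum (L m) t \<sigma>)" if "t > 0" for t \<sigma>
    using that by (simp add: L'_def cpowsum_concat cpowsum_mult_cterms
        sum_set_upt_conv_sum_list_nat[symmetric] lessThan_atLeast0)
  have u_pow: "eventually (\<lambda>t. \<forall>\<sigma>\<in>S. \<bar>u t ^ m / fact m\<bar> \<le> 1) (at_right 0)" for m
    using u(2)
  proof eventually_elim
    case (elim t)
    have "\<bar>u t ^ m / fact m\<bar> = \<bar>u t\<bar> ^ m / fact m" by (simp add: abs_divide power_abs)
    also have "\<dots> \<le> \<bar>u t\<bar> ^ m / 1" by (rule divide_left_mono) auto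
    also have "\<dots> \<le> 1" using elim by (simp add: power_le_one)
    finally show ?case by blast
  qed
  have o_coeffs: "unif_o_t (\<lambda>t \<sigma>. u t ^ m / fact m * (A m t \<sigma> - cpowsum (L m) t \<sigma>)) S" if "m < n" for m
  proof (rule unif_o_t_mult_bounded[OF _ u_pow])
    show "unif_o_t (\<lambda>t \<sigma>. A m t \<sigma> - cpowsum (L m) t \<sigma>) S"
      using exp[OF that] K(2,3) unfolding unif_expansion_def by (blast intro: unif_o_t_subset)
  qed
  have o_powers: "unif_o_t (\<lambda>t \<sigma>. (u t ^ m / fact m - powsum (P m) t) * cpowsum (L m) t \<sigma>) S"
    if "m < n" for m
  proof (rule little_o_t_mult_unif_bounded[OF P(2) cpowsum_bounded])
    show "\<forall>p\<in>set (L m). 0 \<le> snd p \<and> (\<forall>\<sigma>\<in>S. \<bar>fst p \<sigma>\<bar> \<le> B m)"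
      using exp[OF that] B[OF that] K(2) unfolding unif_expansion_def by blast
  qed
  have o_terms: "unif_o_t (\<lambda>t \<sigma>. u t ^ m / fact m * (A m t \<sigma> - cpowsum (L m) t \<sigma>) +
      (u t ^ m / fact m - powsum (P m) t) * cpowsum (L m) t \<sigma>) S" if "m < n" for m
    using unif_o_t_add[OF o_coeffs[OF that] o_powers[OF that]] .
  have "unif_o_t (\<lambda>t \<sigma>. (F t \<sigma> - (\<Sum>m<n. A m t \<sigma> / fact m * u t ^ m)) +
      (\<Sum>m\<in>{..<n}. u t ^ m / fact m * (A m t \<sigma> - cpowsum (L m) t \<sigma>) +
                    (u t ^ m / fact m - powsum (P m) t) * cpowsum (L m) t \<sigma>)) S"
    by (intro unif_o_t_add unif_o_t_powr_bound[OF rem] unif_o_t_sum)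
      (simp, intro ballI o_terms, simp)
  then have "unif_o_t (\<lambda>t \<sigma>. F t \<sigma> - cpowsum L' t \<sigma>) S"
    by (rule unif_o_t_dominated, intro eventually_mono[OF eventually_at_right_0_pos])
      (simp add: cpowsum_L' algebra_simps sum_subtractf sum.distrib)
  moreover have "\<forall>p\<in>set L'. continuous_on S (fst p) \<and> snd p \<ge> 0"
  proof
    fix p assume "p \<in> set L'"
    then obtain m where m: "m < n" "p \<in> set (mult_cterms (P m) (L m))" by (auto simp: L'_def)
    have "\<forall>q\<in>set (mult_cterms (P m) (L m)). continuous_on T (fst q) \<and> snd q \<ge> 0"
      using P(1) exp[OF m(1)] unfolding unif_expansion_def by (intro mult_cterms_props) auto
    then show "continuous_on S (fst p) \<and> snd p \<ge> 0"
      using m(2) K(2,3) continuous_on_subset by blast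
  qed
  ultimately show ?thesis unfolding unif_expansion_def by blast
qed

lemma unif_expansion_std_params:
  assumes hs: "smoothN (Suc N) U h" and c0: "pair_pt N r s0 \<in> U"
  shows "\<exists>\<delta>>0. \<exists>L. unif_expansion (\<lambda>t \<sigma>. h (pair_pt N r \<sigma>)) (ball s0 \<delta>) L"
proof -
  obtain \<eta> where \<eta>: "\<eta> > 0" "\<forall>y\<in>RN (Suc N). (\<forall>i<Suc N. \<bar>y i - pair_pt N r s0 i\<bar> < \<eta>) \<longrightarrow> y \<in> U"
    using smoothN_near[OF hs c0 zero_less_one] by auto
  have "pair_pt N r \<sigma> \<in> U" if "\<sigma> \<in> ball s0 \<eta>" for \<sigma>
    using \<eta> that pair_pt_RN by (auto simp: pair_pt_def dist_real_def abs_minus_commute)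
  then have "continuous_on (ball s0 \<eta>) (\<lambda>\<sigma>. h (pair_pt N r \<sigma>))"
    by (intro continuous_on_pair_pt_line[OF smoothN_continuousN[OF hs]]) blast
  moreover have "unif_o_t (\<lambda>t \<sigma>. h (pair_pt N r \<sigma>) - cpowsum [(\<lambda>\<sigma>. h (pair_pt N r \<sigma>), 0)] t \<sigma>) S" for S
    by (rule unif_o_t_dominated[OF unif_o_t_zero]) (rule eventually_mono[OF eventually_at_right_0_pos], simp)
  ultimately show ?thesis
    using \<eta>(1) unfolding unif_expansion_def
    by (intro exI[of _ \<eta>] conjI exI[of _ "[(\<lambda>\<sigma>. h (pair_pt N r \<sigma>), 0)]"]) auto
qed

lemma subst_coords_taylor_remainder:
  assumes hs: "smoothN (Suc N) U h" and c0: "pair_pt N r s0 \<in> U"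
    and pr: "\<And>i. i < N \<Longrightarrow> (pr i \<longlongrightarrow> r i) (at_right 0)"
    and q: "q < N" "q \<notin> Q" and "n > 0"
  shows "\<exists>\<delta>>0. \<exists>C. eventually (\<lambda>t. \<forall>\<sigma>\<in>ball s0 \<delta>.
    \<bar>h (pair_pt N (subst_coords pr r (insert q Q) t) \<sigma>) -
      (\<Sum>m<n. (partial q ^^ m) h (pair_pt N (subst_coords pr r Q t) \<sigma>) / fact m * (pr q t - r q) ^ m)\<bar>
    \<le> C * \<bar>pr q t - r q\<bar> ^ n) (at_right 0)"
proof -
  define Y where "Y t \<sigma> = pair_pt N (subst_coords pr r Q t) \<sigma>" for t \<sigma>
  define B where "B = \<bar>(partial q ^^ n) h (pair_pt N r s0)\<bar> + 1"
  obtain \<eta> where \<eta>: "\<eta> > 0" "\<forall>y\<in>RN (Suc N). (\<forall>i<Suc N. \<bar>y i - pair_pt N r s0 i\<bar> < \<eta>) \<longrightarrow>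
      y \<in> U \<and> \<bar>(partial q ^^ n) h y - (partial q ^^ n) h (pair_pt N r s0)\<bar> < 1"
    using smoothN_near[OF smoothN_partial_iter[OF hs, of q n] c0 zero_less_one] q(1) by auto
  have "eventually (\<lambda>t. \<forall>i<N. \<bar>pr i t - r i\<bar> < \<eta>) (at_right 0)"
  proof (rule eventually_all_less, intro allI impI)
    fix i assume "i < N"
    from tendstoD[OF pr[OF this] \<eta>(1)] show "eventually (\<lambda>t. \<bar>pr i t - r i\<bar> < \<eta>) (at_right 0)"
      by (simp add: dist_real_def)
  qed
  then have "eventually (\<lambda>t. \<forall>\<sigma>\<in>ball s0 \<eta>. \<bar>h ((Y t \<sigma>)(q := pr q t)) -
      (\<Sum>m<n. (partial q ^^ m) h ((Y t \<sigma>)(q := r q)) / fact m * (pr q t - r q) ^ m)\<bar>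
      \<le> B / fact n * \<bar>pr q t - r q\<bar> ^ n) (at_right 0)"
  proof eventually_elim
    case (elim t)
    show ?case
    proof (intro ballI taylor_along_coordinate[OF hs _ \<open>n > 0\<close>])
      fix \<sigma> y assume "\<sigma> \<in> ball s0 \<eta>" "\<bar>y - r q\<bar> \<le> \<bar>pr q t - r q\<bar>"
      then have "\<forall>i<Suc N. \<bar>((Y t \<sigma>)(q := y)) i - pair_pt N r s0 i\<bar> < \<eta>"
        using elim q(1) by (auto simp: Y_def pair_pt_def subst_coords_def less_Suc_eq dist_real_def)
      moreover have "(Y t \<sigma>)(q := y) \<in> RN (Suc N)" using q(1)
        by (simp add: Y_def RN_def pair_pt_def)
      ultimately show "(Y t \<sigma>)(q := y) \<in> U \<and> \<bar>(partial q ^^ n) h ((Y t \<sigma>)(q := y))\<bar> \<le> B"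
        using \<eta>(2) unfolding B_def by fastforce
    qed (use q(1) in simp)
  qed
  moreover have "(Y t \<sigma>)(q := r q) = Y t \<sigma>" for t \<sigma>
    using q by (auto simp: Y_def pair_pt_def subst_coords_def)
  moreover have "(Y t \<sigma>)(q := pr q t) = pair_pt N (subst_coords pr r (insert q Q) t) \<sigma>" for t \<sigma>
    using q(1) by (simp add: Y_def pair_pt_upd subst_coords_insert)
  ultimately have "eventually (\<lambda>t. \<forall>\<sigma>\<in>ball s0 \<eta>.
      \<bar>h (pair_pt N (subst_coords pr r (insert q Q) t) \<sigma>) -
        (\<Sum>m<n. (partial q ^^ m) h (pair_pt N (subst_coords pr r Q t) \<sigma>) / fact m * (pr q t - r q) ^ m)\<bar>
      \<le> B / fact n * \<bar>pr q t - r q\<bar> ^ n) (at_right 0)"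
    by (simp add: Y_def)
  then show ?thesis using \<eta>(1) by blast
qed

lemma unif_expansion_subst_coords:
  assumes c0: "pair_pt N r s0 \<in> U"
    and pr: "\<And>i. i < N \<Longrightarrow> pr i \<in> Rot \<and> pr i 0 = r i"
    and "finite Q"
  shows "Q \<subseteq> {..<N} \<Longrightarrow> smoothN (Suc N) U h \<Longrightarrow>
         \<exists>\<delta>>0. \<exists>L. unif_expansion (\<lambda>t \<sigma>. h (pair_pt N (subst_coords pr r Q t) \<sigma>)) (ball s0 \<delta>) L"
  using \<open>finite Q\<close>
proof (induction Q arbitrary: h rule: finite_induct)
  case empty
  then show ?case using unif_expansion_std_params[OF _ c0] by simp
next
  case (insert q Q)
  have qN: "q < N" and QN: "Q \<subseteq> {..<N}" using insert.prems(1) by auto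
  have pr_lim: "(pr i \<longlongrightarrow> r i) (at_right 0)" if "i < N" for i
    using Rot_tendsto[of "pr i"] pr[OF that] by auto
  define u where "u t = pr q t - r q" for t
  obtain K a where a: "a > 0" and uK: "eventually (\<lambda>t. \<bar>u t\<bar> \<le> K * t powr a) (at_right 0)"
    using Rot_powr_bound[of "pr q"] pr[OF qN] unfolding u_def by auto
  obtain n where n: "n > 0" "a * real n > 1" using ex_exponent_gt_1[OF a] by blast
  obtain \<delta>1 C where "\<delta>1 > 0" and rem: "eventually (\<lambda>t. \<forall>\<sigma>\<in>ball s0 \<delta>1.
      \<bar>h (pair_pt N (subst_coords pr r (insert q Q) t) \<sigma>) -
        (\<Sum>m<n. (partial q ^^ m) h (pair_pt N (subst_coords pr r Q t) \<sigma>) / fact m * u t ^ m)\<bar>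
      \<le> C * \<bar>u t\<bar> ^ n) (at_right 0)"
    using subst_coords_taylor_remainder[OF insert.prems(2) c0 pr_lim qN insert.hyps(2) n(1)]
    unfolding u_def by blast
  have "\<exists>\<delta>>0. \<forall>m<n. \<exists>L.
      unif_expansion (\<lambda>t \<sigma>. (partial q ^^ m) h (pair_pt N (subst_coords pr r Q t) \<sigma>)) (ball s0 \<delta>) L"
  proof (rule common_radius)
    show "\<forall>m<n. \<exists>\<delta>>0. \<exists>L.
        unif_expansion (\<lambda>t \<sigma>. (partial q ^^ m) h (pair_pt N (subst_coords pr r Q t) \<sigma>)) (ball s0 \<delta>) L"
      using insert.IH[OF QN smoothN_partial_iter[OF insert.prems(2)]] qN by simp
  qed (meson unif_expansion_subset subset_ball)
  then obtain \<delta> L where "\<delta> > 0" and L: "\<And>m. m < n \<Longrightarrow>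
      unif_expansion (\<lambda>t \<sigma>. (partial q ^^ m) h (pair_pt N (subst_coords pr r Q t) \<sigma>)) (ball s0 \<delta>) (L m)"
    by metis
  define \<delta>' where "\<delta>' = min (\<delta> / 2) \<delta>1"
  have \<delta>': "\<delta>' > 0" "ball s0 \<delta>' \<subseteq> cball s0 (\<delta> / 2)" "cball s0 (\<delta> / 2) \<subseteq> ball s0 \<delta>"
    using \<open>\<delta> > 0\<close> \<open>\<delta>1 > 0\<close> by (auto simp: \<delta>'_def)
  from rem uK eventually_at_right_0_pos
  have "eventually (\<lambda>t. \<forall>\<sigma>\<in>ball s0 \<delta>'. \<bar>h (pair_pt N (subst_coords pr r (insert q Q) t) \<sigma>) -
      (\<Sum>m<n. (partial q ^^ m) h (pair_pt N (subst_coords pr r Q t) \<sigma>) / fact m * u t ^ m)\<bar>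
      \<le> (\<bar>C\<bar> * K ^ n) * t powr (a * real n)) (at_right 0)"
  proof eventually_elim
    case (elim t)
    have "C * \<bar>u t\<bar> ^ n \<le> \<bar>C\<bar> * (K ^ n * t powr (a * real n))"
      using powr_pow_le[OF elim(2,3)] by (intro mult_mono) auto
    then show ?case using elim(1) by (force simp: \<delta>'_def)
  qed
  moreover have "eventually (\<lambda>t. \<bar>u t\<bar> \<le> 1) (at_right 0)"
    using tendstoD[OF pr_lim[OF qN] zero_less_one]
      by eventually_elim (simp add: u_def dist_real_def)
  moreover have "powsum_approx u"
    unfolding u_def by (intro powsum_approx_diff Rot_powsum_approx powsum_approx_const) (use pr qN in blast)
  ultimately have "\<exists>L. unif_expansion (\<lambda>t \<sigma>. h (pair_pt N (subst_coords pr r (insert q Q) t) \<sigma>)) (ball s0 \<delta>') L"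
    by (intro unif_expansion_taylor_sum[OF L _ \<delta>'(2,3) _ _ n(2)]) auto
  then show ?case using \<delta>'(1) by blast
qed

definition peval :: "nat \<Rightarrow> (nat \<Rightarrow> fermat) \<Rightarrow> ((nat \<Rightarrow> real) \<Rightarrow> real) \<Rightarrow> real \<Rightarrow> real \<Rightarrow> real" where
  "peval N p h t \<sigma> = h (pair_pt N (\<lambda>i. rep_fermat (p i) t) \<sigma>)"

lemma peval_at_0: "peval N p h 0 \<sigma> = h (pair_pt N (fstd_vec N p) \<sigma>)"
  unfolding peval_def by (rule arg_cong[of _ _ h], rule pair_pt_cong) (simp add: fstd_vec_def fstd_def)

lemma peval_near:
  assumes hs: "smoothN (Suc N) U h" and c: "pair_pt N (fstd_vec N p) \<sigma>0 \<in> U" and "\<epsilon> > 0"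
  shows "\<exists>\<eta>>0. eventually (\<lambda>t. \<forall>\<sigma>. \<bar>\<sigma> - \<sigma>0\<bar> < \<eta> \<longrightarrow> pair_pt N (\<lambda>i. rep_fermat (p i) t) \<sigma> \<in> U \<and>
     \<bar>peval N p h t \<sigma> - h (pair_pt N (fstd_vec N p) \<sigma>0)\<bar> < \<epsilon>) (at_right 0)"
proof -
  obtain \<eta> where \<eta>: "\<eta> > 0" "\<forall>y\<in>RN (Suc N). (\<forall>i<Suc N. \<bar>y i - pair_pt N (fstd_vec N p) \<sigma>0 i\<bar> < \<eta>) \<longrightarrow>
      y \<in> U \<and> \<bar>h y - h (pair_pt N (fstd_vec N p) \<sigma>0)\<bar> < \<epsilon>"
    using smoothN_near[OF hs c \<open>\<epsilon> > 0\<close>] by blast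
  have "eventually (\<lambda>t. \<forall>i<N. \<bar>rep_fermat (p i) t - fstd (p i)\<bar> < \<eta>) (at_right 0)"
  proof (rule eventually_all_less, intro allI impI)
    fix i
    from tendstoD[OF rep_fermat_tendsto_fstd[of "p i"] \<eta>(1)]
    show "eventually (\<lambda>t. \<bar>rep_fermat (p i) t - fstd (p i)\<bar> < \<eta>) (at_right 0)"
      by (simp add: dist_real_def)
  qed
  then have "eventually (\<lambda>t. \<forall>\<sigma>. \<bar>\<sigma> - \<sigma>0\<bar> < \<eta> \<longrightarrow> pair_pt N (\<lambda>i. rep_fermat (p i) t) \<sigma> \<in> U \<and>
     \<bar>peval N p h t \<sigma> - h (pair_pt N (fstd_vec N p) \<sigma>0)\<bar> < \<epsilon>) (at_right 0)"
  proof eventually_elim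
    case (elim t)
    have "\<forall>i<Suc N. \<bar>pair_pt N (\<lambda>i. rep_fermat (p i) t) \<sigma> i - pair_pt N (fstd_vec N p) \<sigma>0 i\<bar> < \<eta>"
      if "\<bar>\<sigma> - \<sigma>0\<bar> < \<eta>" for \<sigma>
      using elim that by (auto simp: pair_pt_def fstd_vec_def less_Suc_eq)
    then show ?case using \<eta>(2) pair_pt_RN by (simp add: peval_def)
  qed
  then show ?thesis using \<eta>(1) by blast
qed

lemma peval_has_derivative:
  assumes hs: "smoothN (Suc N) U h" and c: "pair_pt N (fstd_vec N p) \<sigma>0 \<in> U"
  shows "\<exists>\<eta>>0. eventually (\<lambda>t. \<forall>\<sigma>. \<bar>\<sigma> - \<sigma>0\<bar> < \<eta> \<longrightarrow>
            (peval N p h t has_real_derivative peval N p (partial N h) t \<sigma>) (at \<sigma>)) (at_right 0)"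
proof -
  obtain \<eta> where \<eta>: "\<eta> > 0" "eventually (\<lambda>t. \<forall>\<sigma>. \<bar>\<sigma> - \<sigma>0\<bar> < \<eta> \<longrightarrow> pair_pt N (\<lambda>i. rep_fermat (p i) t) \<sigma> \<in> U \<and>
     \<bar>peval N p h t \<sigma> - h (pair_pt N (fstd_vec N p) \<sigma>0)\<bar> < 1) (at_right 0)"
    using peval_near[OF hs c, of 1] by auto
  from \<eta>(2) have "eventually (\<lambda>t. \<forall>\<sigma>. \<bar>\<sigma> - \<sigma>0\<bar> < \<eta> \<longrightarrow>
            (peval N p h t has_real_derivative peval N p (partial N h) t \<sigma>) (at \<sigma>)) (at_right 0)"
  proof eventually_elim
    case (elim t)
    show ?case
    proof (intro allI impI)
      fix \<sigma> assume "\<bar>\<sigma> - \<sigma>0\<bar> < \<eta>"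
      with elim have "(pair_pt N (\<lambda>i. rep_fermat (p i) t) \<sigma>)(N := \<sigma>) \<in> U"
        by (simp add: pair_pt_upd_N)
      from has_real_derivative_partial[OF hs _ this]
      have "((\<lambda>y. h (pair_pt N (\<lambda>i. rep_fermat (p i) t) y)) has_real_derivative
          partial N h (pair_pt N (\<lambda>i. rep_fermat (p i) t) \<sigma>)) (at \<sigma>)"
        by (simp add: pair_pt_upd_N)
      moreover have "peval N p h t = (\<lambda>y. h (pair_pt N (\<lambda>i. rep_fermat (p i) t) y))"
        by (rule ext) (simp add: peval_def)
      ultimately show "(peval N p h t has_real_derivative peval N p (partial N h) t \<sigma>) (at \<sigma>)"
        by (simp add: peval_def)
    qed
  qed
  then show ?thesis using \<eta>(1) by blast
qed

lemma peval_tendsto: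
  assumes hs: "smoothN (Suc N) U h" and c: "pair_pt N (fstd_vec N p) \<sigma>0 \<in> U"
    and x: "(x \<longlongrightarrow> \<sigma>0) (at_right 0)"
  shows "((\<lambda>t. peval N p h t (x t)) \<longlongrightarrow> h (pair_pt N (fstd_vec N p) \<sigma>0)) (at_right 0)"
proof (rule tendstoI)
  fix e :: real assume "e > 0"
  then obtain \<eta> where \<eta>: "\<eta> > 0" "eventually (\<lambda>t. \<forall>\<sigma>. \<bar>\<sigma> - \<sigma>0\<bar> < \<eta> \<longrightarrow> pair_pt N (\<lambda>i. rep_fermat (p i) t) \<sigma> \<in> U \<and>
     \<bar>peval N p h t \<sigma> - h (pair_pt N (fstd_vec N p) \<sigma>0)\<bar> < e) (at_right 0)"
    using peval_near[OF hs c] by blast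
  from \<eta>(2) tendstoD[OF x \<eta>(1)]
  show "eventually (\<lambda>t. dist (peval N p h t (x t)) (h (pair_pt N (fstd_vec N p) \<sigma>0)) < e) (at_right 0)"
    by eventually_elim (simp add: dist_real_def)
qed

lemma peval_lipschitz_at:
  assumes hs: "smoothN (Suc N) U h" and c: "pair_pt N (fstd_vec N p) \<sigma>0 \<in> U"
  shows "\<exists>\<eta>>0. \<exists>M. eventually (\<lambda>t. \<forall>\<sigma>. \<bar>\<sigma> - \<sigma>0\<bar> < \<eta> \<longrightarrow>
     \<bar>peval N p h t \<sigma> - peval N p h t \<sigma>0\<bar> \<le> M * \<bar>\<sigma> - \<sigma>0\<bar>) (at_right 0)"
proof -
  obtain \<eta>1 where \<eta>1: "\<eta>1 > 0" "eventually (\<lambda>t. \<forall>\<sigma>. \<bar>\<sigma> - \<sigma>0\<bar> < \<eta>1 \<longrightarrow>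
            (peval N p h t has_real_derivative peval N p (partial N h) t \<sigma>) (at \<sigma>)) (at_right 0)"
    using peval_has_derivative[OF hs c] by auto
  have hs': "smoothN (Suc N) U (partial N h)" by (rule smoothN_partial[OF hs lessI])
  obtain \<eta>2 where \<eta>2: "\<eta>2 > 0" "eventually (\<lambda>t. \<forall>\<sigma>. \<bar>\<sigma> - \<sigma>0\<bar> < \<eta>2 \<longrightarrow> pair_pt N (\<lambda>i. rep_fermat (p i) t) \<sigma> \<in> U \<and>
     \<bar>peval N p (partial N h) t \<sigma> - partial N h (pair_pt N (fstd_vec N p) \<sigma>0)\<bar> < 1) (at_right 0)"
    using peval_near[OF hs' c, of 1] by auto
  define M where "M = \<bar>partial N h (pair_pt N (fstd_vec N p) \<sigma>0)\<bar> + 1"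
  from \<eta>1(2) \<eta>2(2) have "eventually (\<lambda>t. \<forall>\<sigma>. \<bar>\<sigma> - \<sigma>0\<bar> < min \<eta>1 \<eta>2 \<longrightarrow>
     \<bar>peval N p h t \<sigma> - peval N p h t \<sigma>0\<bar> \<le> M * \<bar>\<sigma> - \<sigma>0\<bar>) (at_right 0)"
  proof eventually_elim
    case (elim t)
    show ?case
    proof (intro allI impI abs_diff_le_by_deriv_bound)
      fix \<sigma> z assume "\<bar>\<sigma> - \<sigma>0\<bar> < min \<eta>1 \<eta>2" "min \<sigma> \<sigma>0 \<le> z" "z \<le> max \<sigma> \<sigma>0"
      then have "\<bar>z - \<sigma>0\<bar> < min \<eta>1 \<eta>2" by (auto simp: min_def max_def split: if_splits)
      then show "(peval N p h t has_real_derivative peval N p (partial N h) t z) (at z)"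
        and "\<bar>peval N p (partial N h) t z\<bar> \<le> M"
        using elim by (fastforce simp: M_def)+
    qed
  qed
  then show ?thesis using \<eta>1(1) \<eta>2(1) by (intro exI[of _ "min \<eta>1 \<eta>2"]) auto
qed

lemma unif_expansion_peval:
  assumes hs: "smoothN (Suc N) U h" and c: "pair_pt N (fstd_vec N p) \<sigma>0 \<in> U"
  shows "\<exists>\<delta>>0. \<exists>L. unif_expansion (peval N p h) (ball \<sigma>0 \<delta>) L"
proof -
  have "(\<lambda>t \<sigma>. h (pair_pt N (subst_coords (\<lambda>i. rep_fermat (p i)) (fstd_vec N p) {..<N} t) \<sigma>)) = peval N p h"
    by (intro ext) (simp add: peval_def, rule arg_cong[of _ _ h], rule pair_pt_cong, simp add: subst_coords_def)
  moreover have "rep_fermat (p i) \<in> Rot \<and> rep_fermat (p i) 0 = fstd_vec N p i" if "i < N" for i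
    using that by (simp add: rep_Rot fstd_vec_def fstd_def)
  ultimately show ?thesis using unif_expansion_subst_coords[OF c _ _ _ hs, of "\<lambda>i. rep_fermat (p i)" "{..<N}"]
    by auto
qed

lemma peval_std_Rot:
  assumes hs: "smoothN (Suc N) U h" and c: "pair_pt N (fstd_vec N p) \<sigma>0 \<in> U"
  shows "(\<lambda>t. peval N p h t \<sigma>0) \<in> Rot"
proof -
  obtain \<delta> L where L: "\<delta> > 0" "unif_expansion (peval N p h) (ball \<sigma>0 \<delta>) L"
    using unif_expansion_peval[OF hs c] by blast
  have "nonneg_exps (eval_cterms L \<sigma>0)"
    using L(2) unfolding unif_expansion_def nonneg_exps_def eval_cterms_def by auto
  moreover have "little_o_t (\<lambda>t. peval N p h t \<sigma>0 - powsum (eval_cterms L \<sigma>0) t)"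
    using unif_o_t_imp_little_o_t[of "\<lambda>t \<sigma>. peval N p h t \<sigma> - cpowsum L t \<sigma>" "ball \<sigma>0 \<delta>" \<sigma>0] L
    unfolding unif_expansion_def by (simp add: cpowsum_eval_cterms)
  moreover have "((\<lambda>t. peval N p h t \<sigma>0) \<longlongrightarrow> peval N p h 0 \<sigma>0) (at_right 0)"
    using peval_tendsto[OF hs c tendsto_const] by (simp add: peval_at_0)
  ultimately show ?thesis by (rule Rot_of_powsum_approx)
qed

lemma peval_little_o_t_perturb:
  assumes hs: "smoothN (Suc N) U h" and c: "pair_pt N (fstd_vec N p) \<sigma>0 \<in> U"
    and x: "little_o_t (\<lambda>t. x t - \<sigma>0)"
  shows "little_o_t (\<lambda>t. peval N p h t (x t) - peval N p h t \<sigma>0)"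
proof -
  obtain \<eta> M where \<eta>: "\<eta> > 0" "eventually (\<lambda>t. \<forall>\<sigma>. \<bar>\<sigma> - \<sigma>0\<bar> < \<eta> \<longrightarrow>
     \<bar>peval N p h t \<sigma> - peval N p h t \<sigma>0\<bar> \<le> M * \<bar>\<sigma> - \<sigma>0\<bar>) (at_right 0)"
    using peval_lipschitz_at[OF hs c] by blast
  have "(x \<longlongrightarrow> \<sigma>0) (at_right 0)"
    using tendsto_add[OF little_o_t_tendsto_0[OF x] tendsto_const[of \<sigma>0]] by simp
  from \<eta>(2) tendstoD[OF this \<eta>(1)]
  have "eventually (\<lambda>t. \<bar>peval N p h t (x t) - peval N p h t \<sigma>0\<bar> \<le> \<bar>M * (x t - \<sigma>0)\<bar>) (at_right 0)"
  proof eventually_elim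
    case (elim t)
    then have "\<bar>peval N p h t (x t) - peval N p h t \<sigma>0\<bar> \<le> M * \<bar>x t - \<sigma>0\<bar>"
      by (simp add: dist_real_def)
    also have "\<dots> \<le> \<bar>M * (x t - \<sigma>0)\<bar>" by (simp add: abs_mult mult_right_mono)
    finally show ?case .
  qed
  then show ?thesis by (rule little_o_t_dominated[OF little_o_t_cmult[OF x], rotated])
qed

lemma peval_derivative_expansion:
  assumes hs: "smoothN (Suc N) U h" and c: "pair_pt N (fstd_vec N p) \<sigma>0 \<in> U"
    and W: "open W" "\<sigma>0 \<in> W"
  shows "\<exists>\<delta>>0. ball \<sigma>0 \<delta> \<subseteq> W \<and> (\<exists>L. unif_expansion (peval N p (partial N h)) (ball \<sigma>0 \<delta>) L) \<and>
    eventually (\<lambda>t. \<forall>\<sigma>\<in>ball \<sigma>0 \<delta>.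
      (peval N p h t has_real_derivative peval N p (partial N h) t \<sigma>) (at \<sigma>)) (at_right 0)"
proof -
  obtain \<delta>0 where \<delta>0: "\<delta>0 > 0" "ball \<sigma>0 \<delta>0 \<subseteq> W" using W open_contains_ball by blast
  obtain \<delta>1 L where L: "\<delta>1 > 0" "unif_expansion (peval N p (partial N h)) (ball \<sigma>0 \<delta>1) L"
    using unif_expansion_peval[OF smoothN_partial[OF hs lessI] c] by blast
  obtain \<eta> where \<eta>: "\<eta> > 0" "eventually (\<lambda>t. \<forall>\<sigma>. \<bar>\<sigma> - \<sigma>0\<bar> < \<eta> \<longrightarrow>
      (peval N p h t has_real_derivative peval N p (partial N h) t \<sigma>) (at \<sigma>)) (at_right 0)"
    using peval_has_derivative[OF hs c] by blast
  define \<delta> where "\<delta> = min \<delta>0 (min \<delta>1 \<eta>)"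
  have "unif_expansion (peval N p (partial N h)) (ball \<sigma>0 \<delta>) L"
    by (rule unif_expansion_subset[OF L(2)]) (auto simp: \<delta>_def)
  moreover from \<eta>(2) have "eventually (\<lambda>t. \<forall>\<sigma>\<in>ball \<sigma>0 \<delta>.
      (peval N p h t has_real_derivative peval N p (partial N h) t \<sigma>) (at \<sigma>)) (at_right 0)"
    by eventually_elim (auto simp: \<delta>_def dist_real_def abs_minus_commute)
  moreover have "\<delta> > 0" "ball \<sigma>0 \<delta> \<subseteq> W" using \<delta>0 L(1) \<eta>(1) by (auto simp: \<delta>_def)
  ultimately show ?thesis by blast
qed

lemma peval_partial_little_o_t:
  assumes hs: "smoothN (Suc N) U h" and c: "pair_pt N (fstd_vec N p) \<sigma>0 \<in> U"
    and W: "open W" "\<sigma>0 \<in> W" and o: "\<forall>\<sigma>\<in>W. little_o_t (\<lambda>t. peval N p h t \<sigma>)"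
  shows "little_o_t (\<lambda>t. peval N p (partial N h) t \<sigma>0)"
proof -
  obtain \<delta> L where "\<delta> > 0" "ball \<sigma>0 \<delta> \<subseteq> W" "unif_expansion (peval N p (partial N h)) (ball \<sigma>0 \<delta>) L"
    "eventually (\<lambda>t. \<forall>\<sigma>\<in>ball \<sigma>0 \<delta>.
      (peval N p h t has_real_derivative peval N p (partial N h) t \<sigma>) (at \<sigma>)) (at_right 0)"
    using peval_derivative_expansion[OF hs c W] by blast
  then show ?thesis using o by (intro unif_expansion_derivative_little_o_t) auto
qed

lemma peval_taylor_little_o_t:
  assumes hs: "smoothN (Suc N) U g" and c: "pair_pt N (fstd_vec N p) s0 \<in> U"
    and x: "x \<in> Rot" "x 0 = s0"
    and higher: "\<And>m. m \<ge> 1 \<Longrightarrow> little_o_t (\<lambda>t. peval N p ((partial N ^^ m) g) t s0)"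
  shows "little_o_t (\<lambda>t. peval N p g t (x t) - peval N p g t s0)"
proof -
  obtain K a where a: "a > 0" and xK: "eventually (\<lambda>t. \<bar>x t - s0\<bar> \<le> K * t powr a) (at_right 0)"
    using Rot_powr_bound[OF x(1)] x(2) by auto
  obtain n where n: "n > 0" "a * real n > 1" using ex_exponent_gt_1[OF a] by blast
  define gm where "gm m = (partial N ^^ m) g" for m
  define c0 where "c0 = pair_pt N (fstd_vec N p) s0"
  obtain \<eta>' where \<eta>': "\<eta>' > 0" "eventually (\<lambda>t. \<forall>\<sigma>. \<bar>\<sigma> - s0\<bar> < \<eta>' \<longrightarrow>
      pair_pt N (\<lambda>i. rep_fermat (p i) t) \<sigma> \<in> U \<and> \<bar>peval N p (gm n) t \<sigma> - gm n c0\<bar> < 1) (at_right 0)"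
    using peval_near[OF smoothN_partial_iter[OF hs lessI, of n] c zero_less_one]
      unfolding gm_def c0_def by blast
  have close: "eventually (\<lambda>t. \<bar>x t - s0\<bar> < min 1 \<eta>') (at_right 0)"
    using tendstoD[OF Rot_tendsto[OF x(1)], of "min 1 \<eta>'"] x(2) \<eta>'(1)
    by (simp add: dist_real_def)
  have terms: "little_o_t (\<lambda>t. peval N p (gm m) t s0 / fact m * (x t - s0) ^ m)" if "m \<ge> 1" for m
  proof -
    from close have "eventually (\<lambda>t. \<bar>(x t - s0) ^ m / fact m\<bar> \<le> 1) (at_right 0)"
    proof eventually_elim
      case (elim t)
      have "\<bar>(x t - s0) ^ m / fact m\<bar> = \<bar>x t - s0\<bar> ^ m / fact m" by (simp add: abs_divide power_abs)
      also have "\<dots> \<le> \<bar>x t - s0\<bar> ^ m / 1" by (rule divide_left_mono) auto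
      also have "\<dots> \<le> 1" using elim by (simp add: power_le_one)
      finally show ?case .
    qed
    from little_o_t_mult_bounded[OF higher[OF that, folded gm_def] this] show ?thesis
      by (simp add: algebra_simps)
  qed
  define C where "C = (\<bar>gm n c0\<bar> + 1) / fact n * K ^ n"
  have "eventually (\<lambda>t. \<bar>peval N p g t (x t) - (\<Sum>m<n. peval N p (gm m) t s0 / fact m * (x t - s0) ^ m)\<bar>
      \<le> C * t powr (a * real n)) (at_right 0)"
    using \<eta>'(2) close xK eventually_at_right_0_pos
  proof eventually_elim
    case (elim t)
    define Y where "Y = pair_pt N (\<lambda>i. rep_fermat (p i) t) s0"
    have Y: "peval N p h t y = h (Y(N := y))" for h y by (simp add: Y_def peval_def pair_pt_upd_N)
    have "\<bar>g (Y(N := x t)) - (\<Sum>m<n. gm m (Y(N := s0)) / fact m * (x t - s0) ^ m)\<bar>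
        \<le> (\<bar>gm n c0\<bar> + 1) / fact n * \<bar>x t - s0\<bar> ^ n"
      unfolding gm_def
    proof (rule taylor_along_coordinate[OF hs lessI n(1)])
      fix y assume "\<bar>y - s0\<bar> \<le> \<bar>x t - s0\<bar>"
      then have "pair_pt N (\<lambda>i. rep_fermat (p i) t) y \<in> U \<and> \<bar>peval N p (gm n) t y - gm n c0\<bar> < 1"
        using elim(1,2) by auto
      then show "Y(N := y) \<in> U \<and> \<bar>(partial N ^^ n) g (Y(N := y))\<bar> \<le> \<bar>(partial N ^^ n) g c0\<bar> + 1"
        by (auto simp: Y Y_def pair_pt_upd_N gm_def)
    qed
    also have "\<dots> \<le> (\<bar>gm n c0\<bar> + 1) / fact n * (K ^ n * t powr (a * real n))"
      by (intro mult_left_mono powr_pow_le[OF elim(3,4)]) auto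
    also have "\<dots> = C * t powr (a * real n)" by (simp add: C_def)
    finally show ?case by (simp add: Y)
  qed
  then have "little_o_t (\<lambda>t. peval N p g t (x t) - (\<Sum>m<n. peval N p (gm m) t s0 / fact m * (x t - s0) ^ m))"
    by (rule little_o_t_powr_bound[OF n(2)])
  moreover have "little_o_t (\<lambda>t. \<Sum>m\<in>{1..<n}. peval N p (gm m) t s0 / fact m * (x t - s0) ^ m)"
    by (rule little_o_t_sum) (simp, intro ballI terms, simp)
  ultimately have "little_o_t (\<lambda>t. (peval N p g t (x t) - (\<Sum>m<n. peval N p (gm m) t s0 / fact m * (x t - s0) ^ m)) +
      (\<Sum>m\<in>{1..<n}. peval N p (gm m) t s0 / fact m * (x t - s0) ^ m))"
    by (rule little_o_t_add)
  moreover have "(\<Sum>m<n. F m) = F 0 + (\<Sum>m\<in>{1..<n}. F m)" for F :: "nat \<Rightarrow> real"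
    using n(1) by (simp add: lessThan_atLeast0 sum.atLeast_Suc_lessThan)
  ultimately show ?thesis by (simp add: gm_def)
qed

lemma fext_fun_eq_abs_fermat:
  assumes hs: "smoothN (Suc N) U h" and c: "pair_pt N (fstd_vec N p) (fstd y) \<in> U"
    and z: "z \<in> Rot" "little_o_t (\<lambda>t. peval N p h t (rep_fermat y t) - z t)"
  shows "fext_fun N h p y = abs_fermat z"
proof -
  define Y where "Y t = peval N p h t (rep_fermat y t)" for t
  have "(Y \<longlongrightarrow> Y 0) (at_right 0)"
    using peval_tendsto[OF hs c rep_fermat_tendsto_fstd]
      by (simp add: Y_def[abs_def] peval_at_0 fstd_def)
  then have "Y \<in> Rot" using Rot_of_little_o_t_close[OF z(1)] z(2) by (simp add: Y_def)
  then show ?thesis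
    using abs_fermat_eqI[OF _ z(1)] z(2) by (simp add: fext_fun_def Y_def[abs_def] peval_def)
qed

lemma fext_fun_fconst:
  assumes hs: "smoothN (Suc N) U h" and c: "pair_pt N (fstd_vec N p) \<sigma> \<in> U"
  shows "fext_fun N h p (fconst \<sigma>) = abs_fermat (\<lambda>t. peval N p h t \<sigma>)"
  using fext_fun_eq_abs_fermat[OF hs _ peval_std_Rot[OF hs c]
      peval_little_o_t_perturb[OF hs c rep_fconst_little_o_t]] c
  by simp

lemma local_reprD:
  assumes "local_repr S f x V N P p g"
  shows "smoothN (Suc N) (prod_dom N P V) g"
    "\<And>\<sigma>. \<sigma> \<in> V \<Longrightarrow> pair_pt N (fstd_vec N p) \<sigma> \<in> prod_dom N P V" "open V" "fstd x \<in> V"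
    "\<And>y. y \<in> S \<Longrightarrow> fstd y \<in> V \<Longrightarrow> f y = fext_fun N g p y"
  using assms unfolding local_repr_def prod_dom_def by auto

section \<open>Smooth functions with vanishing derivative\<close>

locale flat_fderiv =
  fixes lc rc :: bool and a b :: fext and f :: "fermat \<Rightarrow> fermat"
  assumes nondegenerate: "fext_std a < fext_std b"
    and smooth: "fsmooth (finterval lc a b rc) f"
    and fderiv_zero: "\<forall>x\<in>finterval_int a b. fderiv (finterval lc a b rc) f x = fzero"
begin

abbreviation "J \<equiv> finterval lc a b rc"

definition std_int :: "real set" where
  "std_int = {\<sigma>. fext_std a < ereal \<sigma> \<and> ereal \<sigma> < fext_std b}"

definition std_closed_int :: "real set" where
  "std_closed_int = {\<sigma>. fext_std a \<le> ereal \<sigma> \<and> ereal \<sigma> \<le> fext_std b}"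

lemma open_std_int: "open std_int"
proof -
  have "std_int = ereal -` {fext_std a <..< fext_std b}" by (auto simp: std_int_def)
  then show ?thesis by (simp add: open_ereal_vimage)
qed

lemma connected_std_int: "connected std_int"
proof (rule is_interval_connected, unfold is_interval_1, intro ballI allI impI)
  fix u v w assume "u \<in> std_int" "v \<in> std_int" "u \<le> w \<and> w \<le> v"
  then have "fext_std a < ereal u" "ereal u \<le> ereal w" "ereal w \<le> ereal v" "ereal v < fext_std b"
    by (auto simp: std_int_def)
  then show "w \<in> std_int" unfolding std_int_def
    using order_less_le_trans[of "fext_std a" "ereal u" "ereal w"]
      order_le_less_trans[of "ereal w" "ereal v" "fext_std b"] by simp
qed

lemma segment_subset_std_closed_int:
  assumes "s \<in> std_closed_int" "\<sigma> \<in> std_closed_int"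
  shows "{min \<sigma> s..max \<sigma> s} \<subseteq> std_closed_int"
proof
  fix y assume "y \<in> {min \<sigma> s..max \<sigma> s}"
  then have "min (ereal \<sigma>) (ereal s) \<le> ereal y" "ereal y \<le> max (ereal \<sigma>) (ereal s)"
    by (auto simp: min_def max_def)
  moreover have "fext_std a \<le> min (ereal \<sigma>) (ereal s)" "max (ereal \<sigma>) (ereal s) \<le> fext_std b"
    using assms by (auto simp: std_closed_int_def)
  ultimately show "y \<in> std_closed_int" unfolding std_closed_int_def
    using order_trans[of "fext_std a" "min (ereal \<sigma>) (ereal s)" "ereal y"]
      order_trans[of "ereal y" "max (ereal \<sigma>) (ereal s)" "fext_std b"] by simp
qed

lemma std_int_subset_std_closed_int: "std_int \<subseteq> std_closed_int"
  by (auto simp: std_int_def std_closed_int_def)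

lemma fstd_in_std_closed_int: "x \<in> J \<Longrightarrow> fstd x \<in> std_closed_int"
  using finterval_fstd_bounds by (auto simp: std_closed_int_def)

lemma std_int_dense: "y \<in> std_closed_int \<Longrightarrow> \<epsilon> > 0 \<Longrightarrow> \<exists>\<tau>\<in>std_int. \<bar>\<tau> - y\<bar> < \<epsilon>"
  using ereal_interval_approx[OF nondegenerate] by (auto simp: std_int_def std_closed_int_def)

lemma fconst_std_int_in_J: "\<sigma> \<in> std_int \<Longrightarrow> fconst \<sigma> \<in> J"
  by (rule fconst_in_finterval) (auto simp: std_int_def)

lemma local_repr_exists: "x \<in> J \<Longrightarrow> \<exists>V N P p g. local_repr J f x V N P p g"
  using smooth by (auto simp: fsmooth_def)

lemma local_repr_fconst:
  assumes R: "local_repr J f x V N P p g" and "\<sigma> \<in> V" "\<sigma> \<in> std_int"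
  shows "f (fconst \<sigma>) = abs_fermat (\<lambda>t. peval N p g t \<sigma>)"
  using local_reprD(5)[OF R fconst_std_int_in_J] fext_fun_fconst[OF local_reprD(1,2)[OF R]] assms(2,3)
  by simp

lemma local_reprs_agree:
  assumes R: "local_repr J f x V N P p g" and R': "local_repr J f x' V' N' P' p' g'"
    and "\<tau> \<in> V" "\<tau> \<in> V'" "\<tau> \<in> std_int"
  shows "little_o_t (\<lambda>t. peval N p g t \<tau> - peval N' p' g' t \<tau>)"
proof (rule abs_fermat_eqD)
  show "(\<lambda>t. peval N p g t \<tau>) \<in> Rot" "(\<lambda>t. peval N' p' g' t \<tau>) \<in> Rot"
    using peval_std_Rot local_reprD(1,2)[OF R] local_reprD(1,2)[OF R'] assms(3,4) by blast+
  show "abs_fermat (\<lambda>t. peval N p g t \<tau>) = abs_fermat (\<lambda>t. peval N' p' g' t \<tau>)"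
    using local_repr_fconst[OF R assms(3,5)] local_repr_fconst[OF R' assms(4,5)] by simp
qed

text \<open>Since fderiv picks an arbitrary local representation, the hypothesis only
  controls the derivative of that particular representation.\<close>

lemma fderiv_representation:
  assumes "\<sigma> \<in> std_int"
  obtains V N P p g where "local_repr J f (fconst \<sigma>) V N P p g"
    "little_o_t (\<lambda>t. peval N p (partial N g) t \<sigma>)"
proof -
  have "\<exists>d V N P p g. local_repr J f (fconst \<sigma>) V N P p g \<and> d = fext_fun N (partial N g) p (fconst \<sigma>)"
    using local_repr_exists[OF fconst_std_int_in_J[OF assms]] by blast
  from someI_ex[OF this[unfolded ex_comm[of "\<lambda>d V. _"]]]
  obtain V N P p g where R: "local_repr J f (fconst \<sigma>) V N P p g"
    and "fderiv J f (fconst \<sigma>) = fext_fun N (partial N g) p (fconst \<sigma>)"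
    unfolding fderiv_def by blast
  moreover have "fconst \<sigma> \<in> finterval_int a b" using assms
    by (simp add: std_int_def finterval_int_def)
  ultimately have "fext_fun N (partial N g) p (fconst \<sigma>) = abs_fermat (\<lambda>t. 0)"
    using fderiv_zero by (simp add: fzero_def)
  moreover have hs: "smoothN (Suc N) (prod_dom N P V) (partial N g)"
    using smoothN_partial[OF local_reprD(1)[OF R] lessI] .
  moreover have c: "pair_pt N (fstd_vec N p) \<sigma> \<in> prod_dom N P V"
    using local_reprD(2,4)[OF R] by simp
  ultimately have "abs_fermat (\<lambda>t. peval N p (partial N g) t \<sigma>) = abs_fermat (\<lambda>t. 0)"
    using fext_fun_fconst by simp
  then have "little_o_t (\<lambda>t. peval N p (partial N g) t \<sigma> - 0)"
    by (rule abs_fermat_eqD[OF peval_std_Rot[OF hs c] Rot_const])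
  with R show ?thesis by (intro that) simp_all
qed

lemma peval_partial_little_o_t_std_int:
  assumes R: "local_repr J f x V N P p g" and \<sigma>: "\<sigma> \<in> V" "\<sigma> \<in> std_int"
  shows "little_o_t (\<lambda>t. peval N p (partial N g) t \<sigma>)"
proof -
  obtain V' N' P' p' g' where R': "local_repr J f (fconst \<sigma>) V' N' P' p' g'"
    and o': "little_o_t (\<lambda>t. peval N' p' (partial N' g') t \<sigma>)"
    using fderiv_representation[OF \<sigma>(2)] by blast
  note R1 = local_reprD[OF R] and R2 = local_reprD[OF R']
  have \<sigma>': "\<sigma> \<in> V'" using R2(4) by simp
  have W: "open (V \<inter> V' \<inter> std_int)" "\<sigma> \<in> V \<inter> V' \<inter> std_int"
    using R1(3) R2(3) open_std_int \<sigma> \<sigma>' by auto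
  obtain \<delta>1 L1 where \<delta>1: "\<delta>1 > 0" "ball \<sigma> \<delta>1 \<subseteq> V \<inter> V' \<inter> std_int"
    "unif_expansion (peval N p (partial N g)) (ball \<sigma> \<delta>1) L1"
    "eventually (\<lambda>t. \<forall>\<tau>\<in>ball \<sigma> \<delta>1.
      (peval N p g t has_real_derivative peval N p (partial N g) t \<tau>) (at \<tau>)) (at_right 0)"
    using peval_derivative_expansion[OF R1(1) R1(2)[OF \<sigma>(1)] W] by blast
  obtain \<delta>2 L2 where \<delta>2: "\<delta>2 > 0"
    "unif_expansion (peval N' p' (partial N' g')) (ball \<sigma> \<delta>2) L2"
    "eventually (\<lambda>t. \<forall>\<tau>\<in>ball \<sigma> \<delta>2.
      (peval N' p' g' t has_real_derivative peval N' p' (partial N' g') t \<tau>) (at \<tau>)) (at_right 0)"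
    using peval_derivative_expansion[OF R2(1) R2(2)[OF \<sigma>'] W] by blast
  define \<delta> where "\<delta> = min \<delta>1 \<delta>2"
  have "little_o_t (\<lambda>t. peval N p (partial N g) t \<sigma> - peval N' p' (partial N' g') t \<sigma>)"
  proof (rule unif_expansion_derivative_little_o_t[where D = "\<lambda>t \<tau>. peval N p g t \<tau> - peval N' p' g' t \<tau>"])
    show "\<delta> > 0" using \<delta>1(1) \<delta>2(1) by (simp add: \<delta>_def)
    show "unif_expansion (\<lambda>t \<tau>. peval N p (partial N g) t \<tau> - peval N' p' (partial N' g') t \<tau>)
        (ball \<sigma> \<delta>) (L1 @ neg_cterms L2)"
      by (intro unif_expansion_diff unif_expansion_subset[OF \<delta>1(3)] unif_expansion_subset[OF \<delta>2(2)])
        (auto simp: \<delta>_def)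
    show "eventually (\<lambda>t. \<forall>\<tau>\<in>ball \<sigma> \<delta>. ((\<lambda>\<tau>. peval N p g t \<tau> - peval N' p' g' t \<tau>) has_real_derivative
        peval N p (partial N g) t \<tau> - peval N' p' (partial N' g') t \<tau>) (at \<tau>)) (at_right 0)"
      using \<delta>1(4) \<delta>2(3) by eventually_elim (auto simp: \<delta>_def intro!: DERIV_diff)
    show "\<forall>\<tau>\<in>ball \<sigma> \<delta>. little_o_t (\<lambda>t. peval N p g t \<tau> - peval N' p' g' t \<tau>)"
    proof
      fix \<tau> assume "\<tau> \<in> ball \<sigma> \<delta>"
      then have "\<tau> \<in> V \<inter> V' \<inter> std_int" using \<delta>1(2) by (auto simp: \<delta>_def)
      then show "little_o_t (\<lambda>t. peval N p g t \<tau> - peval N' p' g' t \<tau>)"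
        using local_reprs_agree[OF R R'] by blast
    qed
  qed
  then show ?thesis using little_o_t_add[OF _ o'] by fastforce
qed

lemma peval_partial_iter_little_o_t_std_int:
  assumes R: "local_repr J f x V N P p g" and "\<sigma> \<in> V" "\<sigma> \<in> std_int"
  shows "little_o_t (\<lambda>t. peval N p ((partial N ^^ Suc k) g) t \<sigma>)"
  using assms(2,3)
proof (induction k arbitrary: \<sigma>)
  case 0
  then show ?case using peval_partial_little_o_t_std_int[OF R] by simp
next
  case (Suc k)
  note R1 = local_reprD[OF R]
  have "little_o_t (\<lambda>t. peval N p (partial N ((partial N ^^ Suc k) g)) t \<sigma>)"
    by (rule peval_partial_little_o_t[OF smoothN_partial_iter[OF R1(1) lessI] R1(2)[OF Suc.prems(1)],
          where W = "V \<inter> std_int"])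
      (use R1(3) open_std_int Suc in auto)
  then show ?case by simp
qed

text \<open>Continuity of the coefficients of the expansion carries the vanishing of the higher
  derivatives from the interior to the standard points at the ends of the interval.\<close>

lemma peval_partial_iter_unif_o_t:
  assumes R: "local_repr J f x V N P p g" and s0: "s0 \<in> V"
  shows "\<exists>\<delta>>0. ball s0 \<delta> \<subseteq> V \<and> (\<forall>K. compact K \<longrightarrow> K \<subseteq> ball s0 \<delta> \<longrightarrow> K \<subseteq> std_closed_int \<longrightarrow>
    unif_o_t (peval N p ((partial N ^^ Suc k) g)) K)"
proof -
  note R1 = local_reprD[OF R]
  define h where "h = (partial N ^^ Suc k) g"
  obtain \<delta>1 L where L: "\<delta>1 > 0" "unif_expansion (peval N p h) (ball s0 \<delta>1) L"
    using unif_expansion_peval[OF smoothN_partial_iter[OF R1(1) lessI, of "Suc k"] R1(2)[OF s0]]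
    unfolding h_def by blast
  obtain \<delta>0 where \<delta>0: "\<delta>0 > 0" "ball s0 \<delta>0 \<subseteq> V" using R1(3) s0 open_contains_ball by blast
  define \<delta> where "\<delta> = min \<delta>0 \<delta>1"
  have ball: "ball s0 \<delta> \<subseteq> V" using \<delta>0(2) by (auto simp: \<delta>_def)
  have exp: "unif_expansion (peval N p h) (ball s0 \<delta>) L"
    by (rule unif_expansion_subset[OF L(2)]) (auto simp: \<delta>_def)
  have "unif_o_t (peval N p h) K" if K: "compact K" "K \<subseteq> ball s0 \<delta>" "K \<subseteq> std_closed_int" for K
  proof (rule unif_o_t_of_dense_little_o_t[OF exp K(1,2), of "ball s0 \<delta> \<inter> std_int"])
    show "\<forall>\<tau>\<in>ball s0 \<delta> \<inter> std_int. little_o_t (\<lambda>t. peval N p h t \<tau>)"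
      using peval_partial_iter_little_o_t_std_int[OF R] ball by (auto simp: h_def)
    show "\<forall>y\<in>K. \<forall>\<epsilon>>0. \<exists>\<tau>\<in>ball s0 \<delta> \<inter> std_int. \<bar>\<tau> - y\<bar> < \<epsilon>"
    proof (intro ballI allI impI)
      fix y \<epsilon> assume y: "y \<in> K" and "(\<epsilon>::real) > 0"
      then have "min \<epsilon> (\<delta> - dist s0 y) > 0" using K(2) by auto
      then obtain \<tau> where "\<tau> \<in> std_int" "\<bar>\<tau> - y\<bar> < min \<epsilon> (\<delta> - dist s0 y)"
        using std_int_dense y K(3) by blast
      then show "\<exists>\<tau>\<in>ball s0 \<delta> \<inter> std_int. \<bar>\<tau> - y\<bar> < \<epsilon>"
        by (intro bexI[of _ \<tau>]) (auto simp: dist_real_def)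
    qed
  qed blast
  then show ?thesis using \<delta>0(1) L(1) ball by (intro exI[of _ \<delta>]) (auto simp: h_def \<delta>_def)
qed

lemma peval_little_o_t_near:
  assumes R: "local_repr J f x V N P p g" and x: "x \<in> J"
  shows "\<exists>\<delta>>0. \<forall>\<sigma>\<in>std_int. \<bar>\<sigma> - fstd x\<bar> < \<delta> \<longrightarrow>
    \<sigma> \<in> V \<and> little_o_t (\<lambda>t. peval N p g t (rep_fermat x t) - peval N p g t \<sigma>)"
proof -
  note R1 = local_reprD[OF R]
  define s0 where "s0 = fstd x"
  have s0: "s0 \<in> V" "s0 \<in> std_closed_int" using R1(4) fstd_in_std_closed_int[OF x]
    by (simp_all add: s0_def)
  have taylor: "little_o_t (\<lambda>t. peval N p g t (rep_fermat x t) - peval N p g t s0)"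
  proof (rule peval_taylor_little_o_t[OF R1(1) R1(2)[OF s0(1)] rep_Rot])
    show "rep_fermat x 0 = s0" by (simp add: s0_def fstd_def)
    fix m :: nat assume "m \<ge> 1"
    then obtain k where "m = Suc k" by (cases m) auto
    with peval_partial_iter_unif_o_t[OF R s0(1), of k] s0(2)
    show "little_o_t (\<lambda>t. peval N p ((partial N ^^ m) g) t s0)"
      by (auto intro: unif_o_t_imp_little_o_t[of _ "{s0}"])
  qed
  obtain \<delta>1 where \<delta>1: "\<delta>1 > 0" "ball s0 \<delta>1 \<subseteq> V"
    "\<And>K. compact K \<Longrightarrow> K \<subseteq> ball s0 \<delta>1 \<Longrightarrow> K \<subseteq> std_closed_int \<Longrightarrow> unif_o_t (peval N p (partial N g)) K"
    using peval_partial_iter_unif_o_t[OF R s0(1), of 0] by auto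
  obtain \<eta> where \<eta>: "\<eta> > 0" "eventually (\<lambda>t. \<forall>\<sigma>. \<bar>\<sigma> - s0\<bar> < \<eta> \<longrightarrow>
      (peval N p g t has_real_derivative peval N p (partial N g) t \<sigma>) (at \<sigma>)) (at_right 0)"
    using peval_has_derivative[OF R1(1) R1(2)[OF s0(1)]] by blast
  have "\<sigma> \<in> V \<and> little_o_t (\<lambda>t. peval N p g t (rep_fermat x t) - peval N p g t \<sigma>)"
    if \<sigma>: "\<sigma> \<in> std_int" "\<bar>\<sigma> - s0\<bar> < min \<delta>1 \<eta>" for \<sigma>
  proof -
    define K where "K = {min \<sigma> s0..max \<sigma> s0}"
    have near: "\<bar>y - s0\<bar> < min \<delta>1 \<eta>" if "y \<in> K" for y
      using that \<sigma>(2) by (auto simp: K_def min_def max_def split: if_splits)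
    then have K_ball: "K \<subseteq> ball s0 \<delta>1" by (auto simp: dist_real_def abs_minus_commute)
    have "\<sigma> \<in> K" by (simp add: K_def)
    have "K \<subseteq> std_closed_int"
      unfolding K_def using segment_subset_std_closed_int[OF s0(2)] std_int_subset_std_closed_int \<sigma>(1)
        by blast
    then have "unif_o_t (peval N p (partial N g)) K" using \<delta>1(3)[OF _ K_ball] by (simp add: K_def)
    moreover have "eventually (\<lambda>t. \<forall>z\<in>K.
        (peval N p g t has_real_derivative peval N p (partial N g) t z) (at z)) (at_right 0)"
      using \<eta>(2) by eventually_elim (use near in auto)
    ultimately have "little_o_t (\<lambda>t. peval N p g t \<sigma> - peval N p g t s0)"
      using little_o_t_diff_by_unif_derivative[where F = "peval N p g"] by (simp add: K_def)
    then show ?thesis using little_o_t_diff[OF taylor] K_ball \<delta>1(2) \<open>\<sigma> \<in> K\<close> by fastforce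
  qed
  then show ?thesis using \<delta>1(1) \<eta>(1) by (intro exI[of _ "min \<delta>1 \<eta>"]) (auto simp: s0_def)
qed

lemma f_eq_near_std_int:
  assumes x: "x \<in> J"
  shows "\<exists>\<delta>>0. \<forall>\<sigma>\<in>std_int. \<bar>\<sigma> - fstd x\<bar> < \<delta> \<longrightarrow> f x = f (fconst \<sigma>)"
proof -
  obtain V N P p g where R: "local_repr J f x V N P p g" using local_repr_exists[OF x] by blast
  note R1 = local_reprD[OF R]
  obtain \<delta> where "\<delta> > 0" and \<delta>: "\<forall>\<sigma>\<in>std_int. \<bar>\<sigma> - fstd x\<bar> < \<delta> \<longrightarrow>
      \<sigma> \<in> V \<and> little_o_t (\<lambda>t. peval N p g t (rep_fermat x t) - peval N p g t \<sigma>)"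
    using peval_little_o_t_near[OF R x] by blast
  have "f x = f (fconst \<sigma>)" if \<sigma>: "\<sigma> \<in> std_int" "\<bar>\<sigma> - fstd x\<bar> < \<delta>" for \<sigma>
  proof -
    have "\<sigma> \<in> V" and o: "little_o_t (\<lambda>t. peval N p g t (rep_fermat x t) - peval N p g t \<sigma>)"
      using \<delta> \<sigma> by auto
    have "f x = abs_fermat (\<lambda>t. peval N p g t \<sigma>)"
      using R1(5)[OF x R1(4)] fext_fun_eq_abs_fermat[OF R1(1) R1(2)[OF R1(4)]
          peval_std_Rot[OF R1(1) R1(2)[OF \<open>\<sigma> \<in> V\<close>]] o]
      by simp
    also have "\<dots> = f (fconst \<sigma>)" using local_repr_fconst[OF R \<open>\<sigma> \<in> V\<close> \<sigma>(1)] by simp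
    finally show ?thesis .
  qed
  then show ?thesis using \<open>\<delta> > 0\<close> by blast
qed

lemma f_constant: "\<exists>c. \<forall>x\<in>J. f x = c"
proof -
  obtain \<sigma>0 where \<sigma>0: "\<sigma>0 \<in> std_int"
    using ereal_dense2[OF nondegenerate] by (auto simp: std_int_def)
  have loc: "\<forall>\<sigma>\<in>std_int. eventually (\<lambda>\<sigma>'. f (fconst \<sigma>) = f (fconst \<sigma>')) (at \<sigma> within std_int)"
  proof
    fix \<sigma> assume "\<sigma> \<in> std_int"
    then obtain \<delta> where "\<delta> > 0" "\<forall>\<sigma>'\<in>std_int. \<bar>\<sigma>' - fstd (fconst \<sigma>)\<bar> < \<delta> \<longrightarrow> f (fconst \<sigma>) = f (fconst \<sigma>')"
      using f_eq_near_std_int[OF fconst_std_int_in_J] by blast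
    then show "eventually (\<lambda>\<sigma>'. f (fconst \<sigma>) = f (fconst \<sigma>')) (at \<sigma> within std_int)"
      unfolding eventually_at by (auto simp: dist_real_def)
  qed
  have const: "f (fconst \<sigma>) = f (fconst \<sigma>0)" if "\<sigma> \<in> std_int" for \<sigma>
    using connected_local_const[OF connected_std_int \<sigma>0 that loc] by simp
  have "f x = f (fconst \<sigma>0)" if x: "x \<in> J" for x
  proof -
    obtain \<delta> where "\<delta> > 0" "\<forall>\<sigma>\<in>std_int. \<bar>\<sigma> - fstd x\<bar> < \<delta> \<longrightarrow> f x = f (fconst \<sigma>)"
      using f_eq_near_std_int[OF x] by blast
    moreover obtain \<sigma> where "\<sigma> \<in> std_int" "\<bar>\<sigma> - fstd x\<bar> < \<delta>"
      using std_int_dense[OF fstd_in_std_closed_int[OF x] \<open>\<delta> > 0\<close>] by blast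
    ultimately have "f x = f (fconst \<sigma>)" by blast
    then show ?thesis using const[OF \<open>\<sigma> \<in> std_int\<close>] by simp
  qed
  then show ?thesis by blast
qed

end

theorem theorem7:
  fixes lc rc :: bool and a b :: fext and f :: "fermat \<Rightarrow> fermat"
  assumes "fext_le a b"
    and "fext_std a < fext_std b"
    and "fsmooth (finterval lc a b rc) f"
    and "\<forall>x\<in>finterval_int a b. fderiv (finterval lc a b rc) f x = fzero"
  shows "\<exists>c. \<forall>x\<in>finterval lc a b rc. f x = c"
proof -
  interpret flat_fderiv lc rc a b f using assms(2-4) by unfold_locales
  show ?thesis by (rule f_constant)
qed

end
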